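(* Let $n\ge1$, $\gamma\in[0,1]$ and $\beta=\frac{2}{2-\gamma}$. Then for every $R>0$ there exists a function $U\in C([R,\infty))\cap C^2((R,\infty))$, positive and increasing on $(R,\infty)$, such that $$U''+\Big(\frac{n-1}{r}+\frac r2\Big)U'-\frac\beta2U=\gamma U^{\gamma-1}\ \text{ in }(R,\infty),\qquad U(R)=0,\qquad (U^{1/\beta})'(R)=\frac{\sqrt2}{\beta},$$ and $$\lim_{r\to\infty}\frac{U(r)}{r^\beta}=c\quad\text{for some }c>0.$$
   Context: $(U^{1/\beta})'(R)$ denotes the right derivative at $R$, i.e. $\lim_{r\downarrow R}U^{1/\beta}(r)/(r-R)$. For $\gamma=0$ the right-hand side $\gamma U^{\gamma-1}$ is $0$. *)

theory Defs
  imports "HOL-Analysis.Analysis"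
begin

end

(*
  Write x = r - R. With the integrating factor rho(x) = (R+x)^(n-1) exp((R+x)^2/4) the equation
  becomes (rho U')' = rho (beta/2 U + gamma U^(gamma-1)), and a solution with U(0) = 0 is a fixed
  point of the operator T that integrates this twice from 0. Near 0 the solution behaves like
  a x^beta with a = (sqrt 2/beta)^beta: for gamma > 0 this is the power law for which U'' balances
  gamma U^(gamma-1), for gamma = 0 it is the prescribed slope.
  After truncating the singular term below the envelope exp(-eta) a x^beta, T becomes a
  contraction for the weighted norm sup |U| / (x^beta exp(K x)) on the closed set of functions
  lying between exp(-eta) a x^beta and exp(eta) a x^beta near 0 (eta small, then delta small,
  then K large); Banach's theorem gives a fixed point. It is positive and increasing, so the
  truncation is inactive and it solves the equation. Applying T once more to the envelope of
  optimal width M(d) on (0, d] yields M(d) <= kappa M(d) + O(d^2) with kappa < 1, so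
  U(x) / (a x^beta) -> 1, which is the boundary condition on (U^(1/beta))'.

  For r -> infinity the functional Psi = W (1 + 2(beta+n)/r^2) + 2 U'/r^(beta+1), with
  W = U/r^beta, has Psi' <= O(r^-2) and Psi' >= -k Psi/r^3 by the equation, so it is bounded
  and Psi exp(-k/(2r^2)) increases; hence Psi converges to some L > 0, and since
  U'/r^(beta+1) -> 0 so does W.
*)

theory Submission
  imports Defs "HOL-Analysis.Analysis" "HOL-Real_Asymp.Real_Asymp"
begin

lemma nondecreasing_bounded_tendsto_at_top:
  fixes f :: "real \<Rightarrow> real"
  assumes mono: "\<And>x y. a \<le> x \<Longrightarrow> x \<le> y \<Longrightarrow> f x \<le> f y"
    and bdd: "\<And>x. a \<le> x \<Longrightarrow> f x \<le> B"
  shows "\<exists>L. (f \<longlongrightarrow> L) at_top \<and> f a \<le> L"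
proof -
  define L where "L = Sup (f ` {a..})"
  have bdd': "bdd_above (f ` {a..})" by (rule bdd_aboveI) (use bdd in auto)
  have le: "f x \<le> L" if "a \<le> x" for x
    unfolding L_def using bdd' that by (intro cSup_upper) auto
  have "(f \<longlongrightarrow> L) at_top"
  proof (rule order_tendstoI)
    fix y assume "y < L"
    then obtain x where x: "x \<in> {a..}" "y < f x"
      unfolding L_def using less_cSup_iff[of "f ` {a..}" y] bdd' by auto
    show "\<forall>\<^sub>F t in at_top. y < f t"
      using eventually_ge_at_top[of x] by eventually_elim (use x mono in force)
  next
    fix y assume "L < y"
    show "\<forall>\<^sub>F t in at_top. f t < y"
      using eventually_ge_at_top[of a] by eventually_elim (use le \<open>L < y\<close> in force)
  qed
  then show ?thesis using le by auto
qed

lemma abs_powr_diff_le_nonpos_exponent: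
  fixes e p y1 y2 :: real
  assumes e: "e \<le> 0" and p: "p > 0" "p \<le> y1" "p \<le> y2"
  shows "\<bar>y1 powr e - y2 powr e\<bar> \<le> (- e) * p powr (e - 1) * \<bar>y1 - y2\<bar>"
proof -
  have *: "\<bar>y1 powr e - y2 powr e\<bar> \<le> (- e) * p powr (e - 1) * \<bar>y1 - y2\<bar>"
    if "p \<le> y1" "y1 < y2" for y1 y2
  proof -
    have der: "((\<lambda>y. y powr e) has_real_derivative e * x powr (e - 1)) (at x)" if "y1 \<le> x" for x
      using p that \<open>p \<le> y1\<close> by (intro has_real_derivative_powr) auto
    obtain z where z: "y1 < z" "z < y2" "y2 powr e - y1 powr e = (y2 - y1) * (e * z powr (e - 1))"
      using MVT2[OF \<open>y1 < y2\<close>, of "\<lambda>y. y powr e" "\<lambda>y. e * y powr (e - 1)"] der by blast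
    have "\<bar>e * z powr (e - 1)\<bar> = (- e) * z powr (e - 1)" using e by (simp add: abs_mult)
    also have "\<dots> \<le> (- e) * p powr (e - 1)"
      using z p e that by (intro mult_left_mono powr_mono2') auto
    finally have "\<bar>y2 - y1\<bar> * \<bar>e * z powr (e - 1)\<bar> \<le> \<bar>y2 - y1\<bar> * ((- e) * p powr (e - 1))"
      by (intro mult_left_mono) auto
    then have "\<bar>(y2 - y1) * (e * z powr (e - 1))\<bar> \<le> \<bar>y1 - y2\<bar> * ((- e) * p powr (e - 1))"
      by (simp only: abs_mult abs_minus_commute)
    then show ?thesis using z(3) by (simp add: abs_minus_commute mult.commute)
  qed
  consider "y1 < y2" | "y1 = y2" | "y2 < y1" by linarith
  then show ?thesis
    using *[of y1 y2] *[of y2 y1] p by cases (auto simp: abs_minus_commute)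
qed

lemma integrable_on_Icc_0_if_powr_bounded:
  fixes f :: "real \<Rightarrow> real"
  assumes cont: "continuous_on {0<..s} f" and bd: "\<And>t. t \<in> {0<..s} \<Longrightarrow> \<bar>f t\<bar> \<le> A + B * t powr p"
    and p: "p > -1" and s: "s \<ge> 0"
  shows "f integrable_on {0..s}"
proof -
  have "(\<lambda>t. A + B * t powr p) integrable_on {0..s}"
    using integrable_on_powr_from_0[OF p s] by (intro integrable_add integrable_on_mult_right) auto
  then have majorant: "(\<lambda>t. A + B * t powr p) integrable_on {0<..<s}"
    by (simp add: integrable_on_Icc_iff_Ioo)
  have "continuous_on {0<..<s} f" using cont by (rule continuous_on_subset) auto
  then have "f \<in> borel_measurable (lebesgue_on {0<..<s})"
    by (intro continuous_imp_measurable_on_sets_lebesgue) auto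
  then have "f integrable_on {0<..<s}"
    by (rule measurable_bounded_by_integrable_imp_integrable_real[OF _ majorant]) (use bd in auto)
  then show ?thesis by (simp add: integrable_on_Icc_iff_Ioo)
qed

lemma has_integral_const_Icc_0:
  fixes c s :: real
  assumes "s \<ge> 0"
  shows "((\<lambda>t. c) has_integral c * s) {0..s}"
  using has_integral_const_real[of c 0 s] assms by (simp add: mult.commute)

lemma has_integral_exp_scaled_Icc_0:
  fixes K s :: real
  assumes "K > 0" "s \<ge> 0"
  shows "((\<lambda>t. exp (K * t)) has_integral (exp (K * s) - 1) / K) {0..s}"
proof -
  have "((\<lambda>t. exp (K * t)) has_integral (exp (K * s) / K - exp (K * 0) / K)) {0..s}"
    by (rule fundamental_theorem_of_calculus)
       (use assms in \<open>auto intro!: derivative_eq_intros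
          simp: has_real_derivative_iff_has_vector_derivative[symmetric]\<close>)
  then show ?thesis by (simp add: diff_divide_distrib)
qed

lemma has_integral_id_Icc_0:
  fixes s :: real
  assumes "s \<ge> 0"
  shows "((\<lambda>t. t) has_integral s^2 / 2) {0..s}"
proof -
  have "((\<lambda>t. t) has_integral (s^2 / 2 - 0^2 / 2)) {0..s}"
    by (rule fundamental_theorem_of_calculus)
       (use assms in \<open>auto intro!: derivative_eq_intros
          simp: has_real_derivative_iff_has_vector_derivative[symmetric]\<close>)
  then show ?thesis by simp
qed

lemma iterated_integral_powr_const_exp:
  fixes c1 c2 c3 q K x :: real
  assumes q: "q > -1" and K: "K > 0" and x: "x \<ge> 0"
  defines "G \<equiv> \<lambda>s. c1 * (s powr (q + 1) / (q + 1)) + c2 * s + c3 * ((exp (K * s) - 1) / K)"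
  shows "\<And>s. s \<ge> 0 \<Longrightarrow> ((\<lambda>t. c1 * t powr q + c2 + c3 * exp (K * t)) has_integral G s) {0..s}"
    and "(G has_integral (c1 * (x powr (q + 2) / ((q + 1) * (q + 2))) + c2 * (x^2 / 2)
            + c3 * ((exp (K * x) - 1) / K^2 - x / K))) {0..x}"
proof -
  show "((\<lambda>t. c1 * t powr q + c2 + c3 * exp (K * t)) has_integral G s) {0..s}" if "s \<ge> 0" for s
    unfolding G_def
    by (intro has_integral_add has_integral_mult_right has_integral_powr_from_0
        has_integral_const_Icc_0 has_integral_exp_scaled_Icc_0) (use that q K in auto)
  have exp_part: "((\<lambda>s. (exp (K * s) - 1) / K) has_integral (exp (K * x) - 1) / K^2 - x / K) {0..x}"
  proof -
    have "((\<lambda>s. (1 / K) * exp (K * s) - 1 / K) has_integral (1 / K) * ((exp (K * x) - 1) / K) - (1 / K) * x) {0..x}"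
      by (intro has_integral_diff has_integral_mult_right has_integral_exp_scaled_Icc_0
          has_integral_const_Icc_0) (use x K in auto)
    moreover have "(\<lambda>s. (1 / K) * exp (K * s) - 1 / K) = (\<lambda>s. (exp (K * s) - 1) / K)"
      by (auto simp: diff_divide_distrib)
    moreover have "(1 / K) * ((exp (K * x) - 1) / K) - (1 / K) * x = (exp (K * x) - 1) / K^2 - x / K"
      using K by (simp add: field_simps power2_eq_square)
    ultimately show ?thesis by (simp only:)
  qed
  have "(G has_integral (c1 * ((x powr (q + 1 + 1) / (q + 1 + 1)) / (q + 1)) + c2 * (x^2 / 2)
          + c3 * ((exp (K * x) - 1) / K^2 - x / K))) {0..x}"
    unfolding G_def
    by (intro has_integral_add has_integral_mult_right has_integral_divide has_integral_powr_from_0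
        has_integral_id_Icc_0 exp_part) (use x q in auto)
  moreover have "c1 * ((x powr (q + 1 + 1) / (q + 1 + 1)) / (q + 1)) = c1 * (x powr (q + 2) / ((q + 1) * (q + 2)))"
    by (simp add: field_simps)
  ultimately show "(G has_integral (c1 * (x powr (q + 2) / ((q + 1) * (q + 2))) + c2 * (x^2 / 2)
            + c3 * ((exp (K * x) - 1) / K^2 - x / K))) {0..x}"
    by simp
qed

lemma integral_le_has_integral:
  fixes f G :: "real \<Rightarrow> real"
  assumes "continuous_on {0..x} f" "(G has_integral V) {0..x}" "\<And>s. s \<in> {0..x} \<Longrightarrow> f s \<le> G s"
  shows "integral {0..x} f \<le> V"

    by (rule has_integral_le[OF integrable_integral[OF integrable_continuous_interval[OF assms(1)]] assms(2)])
     (use assms(3) in auto)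

lemma has_integral_le_integral:
  fixes f G :: "real \<Rightarrow> real"
  assumes "continuous_on {0..x} f" "(G has_integral V) {0..x}" "\<And>s. s \<in> {0..x} \<Longrightarrow> G s \<le> f s"
  shows "V \<le> integral {0..x} f"

    by (rule has_integral_le[OF assms(2) integrable_integral[OF integrable_continuous_interval[OF assms(1)]]])
     (use assms(3) in auto)

lemma exp_second_primitive_le:
  fixes K x :: real
  assumes "K > 0" "x \<ge> 0"
  shows "(exp (K * x) - 1) / K^2 - x / K \<le> exp (K * x) / K^2"
proof -
  have "(exp (K * x) - 1) / K^2 \<le> exp (K * x) / K^2" using assms by (intro divide_right_mono) auto
  moreover have "x / K \<ge> 0" using assms by simp
  ultimately show ?thesis by linarith
qed

section \<open>Growth at infinity\<close>

locale increasing_solution =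
  fixes n :: nat and \<beta> \<gamma> R :: real and U U' U'' :: "real \<Rightarrow> real"
  assumes R: "R > 0" and \<beta>: "\<beta> \<ge> 1" and \<gamma>0: "0 \<le> \<gamma>" and \<gamma>1: "\<gamma> \<le> 1" and n: "n \<ge> 1"
    and U_deriv: "\<And>r. r > R \<Longrightarrow> (U has_real_derivative U' r) (at r)"
    and U'_deriv: "\<And>r. r > R \<Longrightarrow> (U' has_real_derivative U'' r) (at r)"
    and U_pos: "\<And>r. r > R \<Longrightarrow> U r > 0" and U'_nonneg: "\<And>r. r > R \<Longrightarrow> U' r \<ge> 0"
    and ode: "\<And>r. r > R \<Longrightarrow> U'' r + ((real n - 1) / r + r / 2) * U' r - \<beta> / 2 * U r
               = \<gamma> * U r powr (\<gamma> - 1)"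
begin

definition "r\<^sub>1 = max R 1 + 1"
definition "W r = U r / r powr \<beta>"
definition "\<Psi> r = W r * (1 + 2 * (\<beta> + n) / r^2) + 2 * U' r / (r powr \<beta> * r)"
definition "k = 2 * (\<beta> + n) * (\<beta> + 2)"
definition "\<Psi>' r = - k * W r / r^3 + 2 * \<gamma> * U r powr (\<gamma> - 1) / (r powr \<beta> * r)"
definition "\<rho> r = exp ((real n - 1) * ln r + r^2 / 4)"

lemma r\<^sub>1: "r\<^sub>1 > R" "r\<^sub>1 > 1"
  unfolding r\<^sub>1_def by auto

lemma k_pos: "k > 0"
  unfolding k_def using \<beta> by auto

lemma U_ge_U_r\<^sub>1:
  assumes "r \<ge> r\<^sub>1"
  shows "U r\<^sub>1 \<le> U r"
proof (rule DERIV_nonneg_imp_nondecreasing[OF assms])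
  fix x assume "r\<^sub>1 \<le> x"
  then have "x > R" using r\<^sub>1 by linarith
  then show "\<exists>y. (U has_real_derivative y) (at x) \<and> 0 \<le> y" using U_deriv U'_nonneg by blast
qed

lemma sing_term_le: "r \<ge> r\<^sub>1 \<Longrightarrow> U r powr (\<gamma> - 1) \<le> U r\<^sub>1 powr (\<gamma> - 1)"
  using U_ge_U_r\<^sub>1 U_pos[of r\<^sub>1] r\<^sub>1 \<gamma>1 by (intro powr_mono2') auto

lemma powr_ge_self: "r \<ge> r\<^sub>1 \<Longrightarrow> r \<le> r powr \<beta>"
  using powr_mono[of 1 \<beta> r] r\<^sub>1 \<beta> by auto

lemma W_pos: "r \<ge> r\<^sub>1 \<Longrightarrow> W r > 0"
  using U_pos[of r] r\<^sub>1 unfolding W_def by auto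

lemma W_le_\<Psi>: "r \<ge> r\<^sub>1 \<Longrightarrow> W r \<le> \<Psi> r"
  using W_pos[of r] U'_nonneg[of r] r\<^sub>1 \<beta> unfolding \<Psi>_def by (auto intro!: add_increasing2)

lemma \<Psi>_deriv:
  assumes r: "r \<ge> r\<^sub>1"
  shows "(\<Psi> has_real_derivative \<Psi>' r) (at r)"
proof -
  have rp: "r > 0" "r > R" using r r\<^sub>1 by auto
  have U'': "U'' r = \<gamma> * U r powr (\<gamma> - 1) + \<beta> / 2 * U r - ((real n - 1) / r + r / 2) * U' r"
    using ode[OF rp(2)] by simp
  have pb: "r powr (\<beta> - 1) = r powr \<beta> / r" using rp by (simp add: powr_diff)
  have dW: "(W has_real_derivative
      (U' r * r powr \<beta> - U r * (\<beta> * r powr (\<beta> - 1))) / (r powr \<beta> * r powr \<beta>)) (at r)"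
    unfolding W_def by (rule derivative_eq_intros U_deriv[OF rp(2)] refl)+ (use rp in auto)
  have dA: "((\<lambda>r. 1 + 2 * (\<beta> + n) / r^2) has_real_derivative - 4 * (\<beta> + n) / r^3) (at r)"
    using rp by (auto intro!: derivative_eq_intros
        simp: field_simps power2_eq_square power3_eq_cube eval_nat_numeral)
  have dV: "((\<lambda>r. 2 * U' r / (r powr \<beta> * r)) has_real_derivative
      (2 * U'' r * (r powr \<beta> * r) - 2 * U' r * (\<beta> * r powr (\<beta> - 1) * r + r powr \<beta>))
        / ((r powr \<beta> * r) * (r powr \<beta> * r))) (at r)"
    using rp by (auto intro!: derivative_eq_intros U'_deriv[OF rp(2)] simp: field_simps)
  have "(\<Psi> has_real_derivative
      (U' r * r powr \<beta> - U r * (\<beta> * r powr (\<beta> - 1))) / (r powr \<beta> * r powr \<beta>) * (1 + 2 * (\<beta> + n) / r^2)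
      + (- 4 * (\<beta> + n) / r^3) * W r
      + (2 * U'' r * (r powr \<beta> * r) - 2 * U' r * (\<beta> * r powr (\<beta> - 1) * r + r powr \<beta>))
        / ((r powr \<beta> * r) * (r powr \<beta> * r))) (at r)"
    unfolding \<Psi>_def by (intro DERIV_add DERIV_mult dW dA dV)
  then show ?thesis
    by (rule DERIV_cong) (use rp in \<open>simp add: \<Psi>'_def W_def U'' pb k_def field_simps
          power2_eq_square power3_eq_cube\<close>)
qed

lemma \<Psi>_bounded: "\<exists>B. \<forall>r\<ge>r\<^sub>1. \<Psi> r \<le> B"
proof -
  define c where "c = 2 * \<gamma> * U r\<^sub>1 powr (\<gamma> - 1)"
  have c: "c \<ge> 0" unfolding c_def using \<gamma>0 by auto
  have \<Psi>'_le: "\<Psi>' r \<le> c / r^2" if r: "r \<ge> r\<^sub>1" for r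
  proof -
    have "- k * W r / r^3 \<le> 0" using k_pos W_pos[OF r] r r\<^sub>1 by (simp add: divide_nonpos_pos)
    moreover have "2 * \<gamma> * U r powr (\<gamma> - 1) / (r powr \<beta> * r) \<le> c / r^2"
    proof (rule frac_le)
      show "2 * \<gamma> * U r powr (\<gamma> - 1) \<le> c"
        unfolding c_def using sing_term_le[OF r] \<gamma>0 by (simp add: mult_left_mono)
      show "r^2 \<le> r powr \<beta> * r"
        using powr_ge_self[OF r] r r\<^sub>1 by (simp add: power2_eq_square mult_right_mono)
    qed (use c \<gamma>0 r r\<^sub>1 in auto)
    ultimately show ?thesis unfolding \<Psi>'_def by linarith
  qed
  have "\<Psi> r \<le> \<Psi> r\<^sub>1 + c / r\<^sub>1" if r: "r \<ge> r\<^sub>1" for r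
  proof -
    have "\<Psi> r + c / r \<le> \<Psi> r\<^sub>1 + c / r\<^sub>1"
    proof (rule deriv_nonpos_imp_antimono[where g = "\<lambda>r. \<Psi> r + c / r" and g' = "\<lambda>x. \<Psi>' x - c / x^2"])
      fix x assume x: "x \<in> {r\<^sub>1..r}"
      then show "((\<lambda>r. \<Psi> r + c / r) has_real_derivative \<Psi>' x - c / x^2) (at x)"
        using \<Psi>_deriv[of x] r\<^sub>1 by (auto intro!: derivative_eq_intros simp: power2_eq_square field_simps)
      show "\<Psi>' x - c / x^2 \<le> 0" using \<Psi>'_le[of x] x by simp
    qed (use r in auto)
    moreover have "c / r \<ge> 0" using c r r\<^sub>1 by auto
    ultimately show ?thesis by simp
  qed
  then show ?thesis by blast
qed

lemma \<Psi>_tendsto: "\<exists>L>0. (\<Psi> \<longlongrightarrow> L) at_top"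
proof -
  define \<Theta> where "\<Theta> r = \<Psi> r * exp (- k / (2 * r^2))" for r
  obtain B where B: "\<And>r. r \<ge> r\<^sub>1 \<Longrightarrow> \<Psi> r \<le> B" using \<Psi>_bounded by blast
  have \<Theta>_mono: "\<Theta> x \<le> \<Theta> y" if "r\<^sub>1 \<le> x" "x \<le> y" for x y
  proof (rule DERIV_nonneg_imp_nondecreasing[OF that(2)])
    fix z assume z: "x \<le> z" "z \<le> y"
    then have zp: "z > 0" "z \<ge> r\<^sub>1" using that r\<^sub>1 by auto
    have "(\<Theta> has_real_derivative (\<Psi>' z + \<Psi> z * (k / z^3)) * exp (- k / (2 * z^2))) (at z)"
      unfolding \<Theta>_def using \<Psi>_deriv[OF zp(2)] zp
      by (auto intro!: derivative_eq_intros simp: power2_eq_square power3_eq_cube field_simps)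
    moreover have "\<Psi>' z + \<Psi> z * (k / z^3) = k * (\<Psi> z - W z) / z^3 + 2 * \<gamma> * U z powr (\<gamma> - 1) / (z powr \<beta> * z)"
      unfolding \<Psi>'_def by (simp add: diff_divide_distrib right_diff_distrib)
    moreover have "\<dots> \<ge> 0" using W_le_\<Psi>[OF zp(2)] k_pos zp \<gamma>0 by auto
    ultimately show "\<exists>y. (\<Theta> has_real_derivative y) (at z) \<and> 0 \<le> y" by auto
  qed
  have \<Theta>_le: "\<Theta> x \<le> B" if "r\<^sub>1 \<le> x" for x
  proof -
    have "\<Psi> x \<ge> 0" using W_le_\<Psi>[OF that] W_pos[OF that] by linarith
    then have "\<Theta> x \<le> \<Psi> x" unfolding \<Theta>_def using k_pos by (simp add: mult_left_le)
    then show ?thesis using B[OF that] by linarith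
  qed
  obtain L where L: "(\<Theta> \<longlongrightarrow> L) at_top" "\<Theta> r\<^sub>1 \<le> L"
    using nondecreasing_bounded_tendsto_at_top[of r\<^sub>1 \<Theta> B, OF \<Theta>_mono \<Theta>_le] by blast
  have "\<Theta> r\<^sub>1 > 0" using W_le_\<Psi>[of r\<^sub>1] W_pos[of r\<^sub>1] unfolding \<Theta>_def by simp
  then have "L > 0" using L by linarith
  have "((\<lambda>r. \<Theta> r * exp (k / (2 * r^2))) \<longlongrightarrow> L * 1) at_top"
    by (intro tendsto_mult L(1)) real_asymp
  moreover have "(\<lambda>r. \<Theta> r * exp (k / (2 * r^2))) = \<Psi>"
    unfolding \<Theta>_def by (simp add: exp_minus field_simps)
  ultimately show ?thesis using \<open>L > 0\<close> by auto
qed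

lemma source_le_power: "\<exists>C\<ge>0. \<forall>r\<ge>r\<^sub>1. \<beta> / 2 * U r + \<gamma> * U r powr (\<gamma> - 1) \<le> C * r powr \<beta>"
proof -
  obtain B where B: "\<And>r. r \<ge> r\<^sub>1 \<Longrightarrow> \<Psi> r \<le> B" using \<Psi>_bounded by blast
  have B_nonneg: "B \<ge> 0" using B[of r\<^sub>1] W_le_\<Psi>[of r\<^sub>1] W_pos[of r\<^sub>1] by auto
  define m where "m = \<gamma> * U r\<^sub>1 powr (\<gamma> - 1)"
  have "\<beta> / 2 * U r + \<gamma> * U r powr (\<gamma> - 1) \<le> (\<beta> / 2 * B + m) * r powr \<beta>" if r: "r \<ge> r\<^sub>1" for r
  proof -
    have "U r = W r * r powr \<beta>" unfolding W_def using r r\<^sub>1 by simp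
    also have "\<dots> \<le> B * r powr \<beta>" using W_le_\<Psi>[OF r] B[OF r] by (intro mult_right_mono) auto
    finally have "\<beta> / 2 * U r \<le> \<beta> / 2 * B * r powr \<beta>" using \<beta> by (simp add: mult_left_mono)
    moreover have "\<gamma> * U r powr (\<gamma> - 1) \<le> m * r powr \<beta>"
    proof -
      have "\<gamma> * U r powr (\<gamma> - 1) \<le> m"
        unfolding m_def using sing_term_le[OF r] \<gamma>0 by (intro mult_left_mono)
      also have "\<dots> \<le> m * r powr \<beta>"
      proof -
        have "1 \<le> r powr \<beta>" using powr_ge_self[OF r] r r\<^sub>1 by linarith
        moreover have "0 \<le> m" unfolding m_def using \<gamma>0 by simp
        ultimately show ?thesis by (simp add: mult_le_cancel_left1)
      qed
      finally show ?thesis .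
    qed
    ultimately show ?thesis by (simp add: algebra_simps)
  qed
  moreover have "\<beta> / 2 * B + m \<ge> 0" unfolding m_def using \<beta> B_nonneg \<gamma>0 by auto
  ultimately show ?thesis by blast
qed

lemma \<rho>_deriv: "r > 0 \<Longrightarrow> (\<rho> has_real_derivative \<rho> r * ((real n - 1) / r + r / 2)) (at r)"
  unfolding \<rho>_def by (auto intro!: derivative_eq_intros simp: field_simps power2_eq_square)

lemma \<rho>_mono: "r\<^sub>1 \<le> r \<Longrightarrow> \<rho> r\<^sub>1 \<le> \<rho> r"
  unfolding \<rho>_def using r\<^sub>1 n by (auto intro!: add_mono mult_left_mono power_mono)

lemma \<rho>_U'_deriv:
  assumes r: "r > R"
  shows "((\<lambda>r. \<rho> r * U' r) has_real_derivative \<rho> r * (\<beta> / 2 * U r + \<gamma> * U r powr (\<gamma> - 1))) (at r)"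
proof -
  have U'': "U'' r = \<gamma> * U r powr (\<gamma> - 1) + \<beta> / 2 * U r - ((real n - 1) / r + r / 2) * U' r"
    using ode[OF r] by simp
  from DERIV_mult[OF \<rho>_deriv U'_deriv[OF r]] show ?thesis
    by (rule DERIV_cong) (use r R in \<open>auto simp: U'' algebra_simps\<close>)
qed

text \<open>Since \<open>(\<rho> U')' = \<rho> (\<beta>/2 U + \<gamma> U\<^sup>\<gamma>\<^sup>-\<^sup>1) \<le> C r\<^sup>\<beta> \<rho>\<close>, which is dominated by \<open>(2 C r\<^sup>\<beta>\<^sup>-\<^sup>1 \<rho>)'\<close>,
  the difference \<open>\<rho> U' - 2 C r\<^sup>\<beta>\<^sup>-\<^sup>1 \<rho>\<close> is nonincreasing.\<close>

lemma U'_le: "\<exists>G C. \<forall>r\<ge>r\<^sub>1. U' r \<le> G + 2 * C * (r powr \<beta> / r)"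
proof -
  obtain C where C: "C \<ge> 0" "\<And>r. r \<ge> r\<^sub>1 \<Longrightarrow> \<beta> / 2 * U r + \<gamma> * U r powr (\<gamma> - 1) \<le> C * r powr \<beta>"
    using source_le_power by blast
  define g where "g r = \<rho> r * U' r - 2 * C * (r powr \<beta> / r) * \<rho> r" for r
  define g' where "g' x = \<rho> x * ((\<beta> / 2 * U x + \<gamma> * U x powr (\<gamma> - 1)) - 2 * C * (\<beta> - 1) * x powr \<beta> / x^2
       - 2 * C * (real n - 1) * x powr \<beta> / x^2 - C * x powr \<beta>)" for x
  have g_deriv: "(g has_real_derivative g' x) (at x)" if x: "x \<ge> r\<^sub>1" for x
  proof -
    have xp: "x > 0" "x > R" using x r\<^sub>1 by auto
    have "((\<lambda>r. r powr \<beta> / r) has_real_derivative (\<beta> - 1) * x powr \<beta> / x^2) (at x)"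
      using xp by (auto intro!: derivative_eq_intros simp: powr_diff field_simps power2_eq_square)
    from DERIV_diff[OF \<rho>_U'_deriv[OF xp(2)] DERIV_mult[OF DERIV_cmult[OF this] \<rho>_deriv[OF xp(1)]]]
    show ?thesis unfolding g_def
      by (rule DERIV_cong) (use xp in \<open>simp add: g'_def field_simps power2_eq_square\<close>)
  qed
  have g'_nonpos: "g' x \<le> 0" if x: "x \<ge> r\<^sub>1" for x
  proof -
    have xp: "x > 0" using x r\<^sub>1 by auto
    have "0 \<le> 2 * C * (\<beta> - 1) * x powr \<beta> / x^2" using C \<beta> xp by auto
    moreover have "0 \<le> 2 * C * (real n - 1) * x powr \<beta> / x^2" using C n xp by auto
    moreover have "\<rho> x > 0" unfolding \<rho>_def by simp
    ultimately show ?thesis unfolding g'_def using C(2)[OF x] by (simp add: mult_nonneg_nonpos)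
  qed
  define G where "G = \<bar>g r\<^sub>1\<bar> / \<rho> r\<^sub>1"
  have "U' r \<le> G + 2 * C * (r powr \<beta> / r)" if r: "r \<ge> r\<^sub>1" for r
  proof -
    have "g r \<le> g r\<^sub>1"
      by (rule deriv_nonpos_imp_antimono[of r\<^sub>1 r g g']) (use r g_deriv g'_nonpos in auto)
    moreover have \<rho>_pos: "\<rho> r\<^sub>1 > 0" "\<rho> r > 0" unfolding \<rho>_def by auto
    ultimately have "U' r \<le> g r\<^sub>1 / \<rho> r + 2 * C * (r powr \<beta> / r)"
      unfolding g_def by (simp add: field_simps)
    moreover have "g r\<^sub>1 / \<rho> r \<le> G" unfolding G_def using \<rho>_pos \<rho>_mono[OF r]
      by (meson abs_ge_self abs_ge_zero divide_right_mono frac_le order.trans)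
    ultimately show ?thesis by simp
  qed
  then show ?thesis by blast
qed

lemma U'_over_power_tendsto: "((\<lambda>r. U' r / (r powr \<beta> * r)) \<longlongrightarrow> 0) at_top"
proof -
  obtain G C where GC: "\<And>r. r \<ge> r\<^sub>1 \<Longrightarrow> U' r \<le> G + 2 * C * (r powr \<beta> / r)"
    using U'_le by blast
  have le: "U' r / (r powr \<beta> * r) \<le> \<bar>G\<bar> / r^2 + 2 * C / r^2" if r: "r \<ge> r\<^sub>1" for r
  proof -
    have rp: "r > 0" using r r\<^sub>1 by auto
    have "U' r / (r powr \<beta> * r) \<le> (G + 2 * C * (r powr \<beta> / r)) / (r powr \<beta> * r)"
      using GC[OF r] rp by (intro divide_right_mono) auto
    also have "\<dots> = G / (r powr \<beta> * r) + 2 * C / r^2" using rp by (simp add: field_simps power2_eq_square)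
    also have "G / (r powr \<beta> * r) \<le> \<bar>G\<bar> / r^2"
    proof -
      have "r^2 \<le> r powr \<beta> * r" using powr_ge_self[OF r] rp by (simp add: power2_eq_square)
      then have "\<bar>G\<bar> / (r powr \<beta> * r) \<le> \<bar>G\<bar> / r^2" using rp by (intro divide_left_mono) auto
      moreover have "G / (r powr \<beta> * r) \<le> \<bar>G\<bar> / (r powr \<beta> * r)"
        using rp by (intro divide_right_mono) auto
      ultimately show ?thesis by linarith
    qed
    finally show ?thesis by simp
  qed
  have "\<forall>\<^sub>F r in at_top. 0 \<le> U' r / (r powr \<beta> * r)"
    using eventually_ge_at_top[of r\<^sub>1] by eventually_elim (use U'_nonneg r\<^sub>1 in auto)
  moreover have "\<forall>\<^sub>F r in at_top. U' r / (r powr \<beta> * r) \<le> \<bar>G\<bar> / r^2 + 2 * C / r^2"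
    using eventually_ge_at_top[of r\<^sub>1] by eventually_elim (rule le)
  moreover have "((\<lambda>r. \<bar>G\<bar> / r^2 + 2 * C / r^2) \<longlongrightarrow> 0) at_top" by real_asymp
  ultimately show ?thesis by (rule tendsto_sandwich[OF _ _ tendsto_const])
qed

theorem W_tendsto: "\<exists>c>0. ((\<lambda>r. U r / r powr \<beta>) \<longlongrightarrow> c) at_top"
proof -
  obtain L where L: "L > 0" "(\<Psi> \<longlongrightarrow> L) at_top" using \<Psi>_tendsto by blast
  have "((\<lambda>r. (\<Psi> r - 2 * (U' r / (r powr \<beta> * r))) / (1 + 2 * (\<beta> + n) / r^2)) \<longlongrightarrow> (L - 2 * 0) / (1 + 0)) at_top"
    by (intro tendsto_intros L(2) U'_over_power_tendsto) (real_asymp, simp)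
  moreover have "\<forall>\<^sub>F r in at_top. (\<Psi> r - 2 * (U' r / (r powr \<beta> * r))) / (1 + 2 * (\<beta> + n) / r^2) = U r / r powr \<beta>"
    using eventually_ge_at_top[of r\<^sub>1]
  proof eventually_elim
    case (elim r)
    have "1 + 2 * (\<beta> + n) / r^2 > 0" using \<beta> by (auto intro!: add_pos_nonneg)
    then show ?case unfolding \<Psi>_def W_def by simp
  qed
  ultimately show ?thesis using L(1) tendsto_cong by fastforce
qed

end

section \<open>The truncated integral equation near the boundary\<close>

locale profile_ode =
  fixes n :: nat and \<gamma> \<beta> R :: real
  assumes n: "n \<ge> 1" and \<gamma>0: "0 \<le> \<gamma>" and \<gamma>1: "\<gamma> \<le> 1" and \<beta>_def: "\<beta> = 2 / (2 - \<gamma>)" and R: "R > 0"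
begin

text \<open>Functions of the shifted variable \<open>x = r - R\<close>. For \<open>\<gamma> = 0\<close> there is no singular term and the
  boundary slope \<open>\<surd>2\<close> enters through the initial flux \<open>c0 * \<rho> 0\<close>; for \<open>\<gamma> > 0\<close> the flux starts at \<open>0\<close>.
  Along \<open>a x\<^sup>\<beta>\<close> the singular term is a multiple of \<open>x\<^sup>q\<close>. For \<open>\<gamma> = 0\<close> the quotient
  \<open>lip_sing \<eta> / (\<beta> * (\<beta> - 1))\<close> below is \<open>0 / 0 = 0\<close>.\<close>

definition "\<rho> x = exp ((real n - 1) * ln (R + x) + (R + x)^2 / 4)"
definition "a = (sqrt 2 / \<beta>) powr \<beta>"
definition "c0 = (if \<gamma> = 0 then sqrt 2 else 0)"
definition "\<kappa> = (if \<gamma> = 0 then 0 else 1 - \<gamma>)"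
definition "q = (if \<gamma> = 0 then 0 else \<beta> - 2)"
definition "enveloped M d U \<longleftrightarrow>
   (\<forall>x. 0 < x \<and> x \<le> d \<longrightarrow> exp (- M) * a * x powr \<beta> \<le> U x \<and> U x \<le> exp M * a * x powr \<beta>)"
definition "lip_sing \<eta> = \<gamma> * (1 - \<gamma>) * (exp (- \<eta>) * a) powr (\<gamma> - 2)"
definition "lip_reg \<eta> \<delta> = \<beta> / 2 + \<gamma> * (1 - \<gamma>) * (exp (- \<eta>) * a * \<delta> powr \<beta>) powr (\<gamma> - 2)"

lemma \<beta>_\<gamma>: "\<beta> * (2 - \<gamma>) = 2" using \<gamma>1 \<beta>_def by (simp add: field_simps)
lemma \<beta>_ge_1: "\<beta> \<ge> 1" unfolding \<beta>_def using \<gamma>0 \<gamma>1 by (simp add: le_divide_eq divide_le_eq)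
lemma \<beta>_le_2: "\<beta> \<le> 2" unfolding \<beta>_def using \<gamma>0 \<gamma>1 by (simp add: le_divide_eq divide_le_eq)
lemma \<beta>_gt_1: "\<gamma> > 0 \<Longrightarrow> \<beta> > 1" unfolding \<beta>_def using \<gamma>0 \<gamma>1 by (simp add: less_divide_eq divide_less_eq)
lemma \<beta>_times_\<gamma>_minus_1: "\<beta> * (\<gamma> - 1) = \<beta> - 2" using \<beta>_\<gamma> by (simp add: algebra_simps)
lemma \<beta>_times_\<gamma>_minus_2: "\<beta> * (\<gamma> - 2) = - 2" using \<beta>_\<gamma> by (simp add: algebra_simps)
lemma a_pos: "a > 0" unfolding a_def using \<beta>_ge_1 by simp

lemma \<gamma>_times_a_powr: "\<gamma> * a powr (\<gamma> - 1) = a * \<beta> * (\<beta> - 1)"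
proof -
  have "a powr (2 - \<gamma>) = (sqrt 2 / \<beta>) powr (\<beta> * (2 - \<gamma>))"
    unfolding a_def using \<beta>_ge_1 by (simp add: powr_powr)
  also have "\<dots> = 2 / \<beta>^2" using \<beta>_\<gamma> \<beta>_ge_1 by (simp add: powr_numeral power_divide)
  finally have "a powr (\<gamma> - 1) = a * \<beta>^2 / 2"
    using powr_diff[of a 1 "2 - \<gamma>"] a_pos by simp
  moreover have "\<beta> - 1 = \<gamma> * \<beta> / 2" using \<beta>_\<gamma> by (simp add: algebra_simps)
  ultimately show ?thesis by (simp only:) (simp add: power2_eq_square)
qed

lemma params_\<gamma>_0: assumes "\<gamma> = 0" shows "\<beta> = 1" "a = sqrt 2" "c0 = sqrt 2" "\<kappa> = 0" "q = 0"
  using assms \<beta>_def unfolding a_def c0_def \<kappa>_def q_def by auto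

lemma \<kappa>: "0 \<le> \<kappa>" "\<kappa> < 1" unfolding \<kappa>_def using \<gamma>0 \<gamma>1 by auto
lemma q_gt_minus_1: "q > -1" unfolding q_def using \<beta>_gt_1 \<gamma>0 by auto

lemma \<rho>_pos: "\<rho> x > 0" unfolding \<rho>_def by simp
lemma \<rho>_nonzero [simp]: "\<rho> x \<noteq> 0" using \<rho>_pos[of x] by simp
lemma \<rho>_mono: assumes "0 \<le> x" "x \<le> y" shows "\<rho> x \<le> \<rho> y"
  unfolding \<rho>_def using assms R n by (auto intro!: add_mono mult_left_mono power_mono)

lemma \<rho>_deriv:
  assumes "x > -R"
  shows "(\<rho> has_real_derivative \<rho> x * ((real n - 1) / (R + x) + (R + x) / 2)) (at x)"
proof -
  have "((\<lambda>x. ln (R + x)) has_real_derivative 1 / (R + x)) (at x)"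
    using assms by (auto intro!: derivative_eq_intros simp: field_simps)
  moreover have "((\<lambda>x. (R + x) * (R + x) / 4) has_real_derivative (R + x) / 2) (at x)"
    using assms by (auto intro!: derivative_eq_intros simp: field_simps)
  ultimately have "((\<lambda>x. (real n - 1) * ln (R + x) + (R + x) * (R + x) / 4) has_real_derivative
      (real n - 1) * (1 / (R + x)) + (R + x) / 2) (at x)"
    by (intro DERIV_add DERIV_cmult)
  then have "((\<lambda>x. (real n - 1) * ln (R + x) + (R + x)^2 / 4) has_real_derivative
      (real n - 1) / (R + x) + (R + x) / 2) (at x)"
    by (simp add: power2_eq_square)
  then show ?thesis unfolding \<rho>_def by (rule DERIV_fun_exp)
qed

lemma c0_nonneg: "c0 \<ge> 0" unfolding c0_def by simp

lemma c0_weight_le: "s \<ge> 0 \<Longrightarrow> c0 * \<rho> 0 / \<rho> s \<le> c0"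
  using \<rho>_mono[of 0 s] \<rho>_pos[of s] c0_nonneg by (simp add: divide_le_eq mult_left_mono)

lemma \<rho>_continuous: "continuous_on {0..} \<rho>"
  unfolding \<rho>_def using R by (auto intro!: continuous_intros)

lemma \<rho>_tendsto: "(\<rho> \<longlongrightarrow> \<rho> 0) (at_right 0)"
  using DERIV_isCont[OF \<rho>_deriv[of 0]] R by (simp add: isCont_def filterlim_at_split)

end

locale truncated_problem = profile_ode +
  fixes \<eta> \<delta> K :: real
  assumes \<eta>: "\<eta> > 0" and \<delta>: "\<delta> > 0" and K: "K \<ge> 1"
    and contraction: "lip_sing \<eta> / (\<beta> * (\<beta> - 1)) + lip_reg \<eta> \<delta> / K^2 < 1"
    and envelope_lower: "exp (- (1 - \<kappa>) * \<eta>) \<le> \<rho> 0 / \<rho> \<delta>"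
    and envelope_upper: "exp (\<kappa> * \<eta>) + \<beta> * exp \<eta> * \<delta>^2 / 4 \<le> exp \<eta>"
begin

text \<open>The singular term is evaluated at \<open>max u (\<phi> t)\<close>, where \<open>\<phi>\<close> is the lower envelope (frozen
  beyond \<open>\<delta>\<close>); this makes \<open>F t\<close> globally Lipschitz and does not change \<open>F\<close> along the solution.\<close>

definition "\<phi> t = exp (- \<eta>) * a * (min t \<delta>) powr \<beta>"
definition "F t u = \<beta> / 2 * u + \<gamma> * (max u (\<phi> t)) powr (\<gamma> - 1)"
definition "flux U s = integral {0..s} (\<lambda>t. \<rho> t * F t (U t))"
definition "T U x = integral {0..x} (\<lambda>s. (c0 * \<rho> 0 + flux U s) / \<rho> s)"
definition "w x = x powr \<beta> * exp (K * x)"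
definition "admissible U D \<longleftrightarrow> continuous_on {0<..} U \<and> (\<forall>x>0. \<bar>U x\<bar> \<le> D * w x) \<and> enveloped \<eta> \<delta> U"
definition "c_sing = \<gamma> * (exp (- \<eta>) * a) powr (\<gamma> - 1)"

lemma \<phi>_pos: "t > 0 \<Longrightarrow> \<phi> t > 0" unfolding \<phi>_def using a_pos \<delta> by simp
lemma \<phi>_continuous: "continuous_on {0<..} \<phi>"
  unfolding \<phi>_def using \<delta> by (auto intro!: continuous_intros)
lemma c_sing_nonneg: "c_sing \<ge> 0" unfolding c_sing_def using \<gamma>0 by simp

lemma w_pos: "x > 0 \<Longrightarrow> w x > 0" unfolding w_def by simp
lemma w_continuous: "continuous_on {0<..} w" unfolding w_def by (auto intro!: continuous_intros)
lemma w_mult_exp: "x > 0 \<Longrightarrow> w x * exp (- K * x) = x powr \<beta>"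
  unfolding w_def by (simp add: mult.assoc exp_add[symmetric])

lemma F_abs_le:
  assumes t: "t > 0"
  shows "\<bar>F t u\<bar> \<le> \<beta> / 2 * \<bar>u\<bar> + c_sing * t powr q + c_sing * \<delta> powr q"
proof (cases "\<gamma> = 0")
  case True then show ?thesis unfolding F_def c_sing_def using \<beta>_ge_1 by (simp add: abs_mult)
next
  case False
  then have g: "\<gamma> > 0" using \<gamma>0 by auto
  have "max u (\<phi> t) powr (\<gamma> - 1) \<le> \<phi> t powr (\<gamma> - 1)" using \<phi>_pos[OF t] \<gamma>1 by (intro powr_mono2') auto
  also have "\<phi> t powr (\<gamma> - 1) = (exp (- \<eta>) * a) powr (\<gamma> - 1) * (min t \<delta>) powr q"
    unfolding \<phi>_def q_def using a_pos g \<beta>_times_\<gamma>_minus_1 by (simp add: powr_mult powr_powr)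
  also have "\<dots> \<le> (exp (- \<eta>) * a) powr (\<gamma> - 1) * (t powr q + \<delta> powr q)"
    by (intro mult_left_mono) (auto simp: min_def)
  finally have "\<gamma> * max u (\<phi> t) powr (\<gamma> - 1) \<le> \<gamma> * ((exp (- \<eta>) * a) powr (\<gamma> - 1) * (t powr q + \<delta> powr q))"
    using g by (intro mult_left_mono) auto
  also have "\<dots> = c_sing * t powr q + c_sing * \<delta> powr q" unfolding c_sing_def by (simp add: algebra_simps)
  finally have "\<gamma> * max u (\<phi> t) powr (\<gamma> - 1) \<le> c_sing * t powr q + c_sing * \<delta> powr q" .
  moreover have "\<gamma> * max u (\<phi> t) powr (\<gamma> - 1) \<ge> 0" using g by simp
  moreover have "\<bar>\<beta> / 2 * u\<bar> = \<beta> / 2 * \<bar>u\<bar>" using \<beta>_ge_1 by (simp add: abs_mult)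
  ultimately show ?thesis unfolding F_def by linarith
qed

lemma F_lipschitz:
  assumes t: "t > 0"
  shows "\<bar>F t u1 - F t u2\<bar> \<le> (\<beta> / 2 + \<gamma> * (1 - \<gamma>) * \<phi> t powr (\<gamma> - 2)) * \<bar>u1 - u2\<bar>"
proof -
  have "\<bar>max u1 (\<phi> t) powr (\<gamma> - 1) - max u2 (\<phi> t) powr (\<gamma> - 1)\<bar>
      \<le> (1 - \<gamma>) * \<phi> t powr (\<gamma> - 2) * \<bar>max u1 (\<phi> t) - max u2 (\<phi> t)\<bar>"
    using abs_powr_diff_le_nonpos_exponent[of "\<gamma> - 1" "\<phi> t"] \<phi>_pos[OF t] \<gamma>1 by auto
  also have "\<dots> \<le> (1 - \<gamma>) * \<phi> t powr (\<gamma> - 2) * \<bar>u1 - u2\<bar>"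
    using \<gamma>1 by (intro mult_left_mono) (auto simp: max_def)
  finally have sing: "\<bar>max u1 (\<phi> t) powr (\<gamma> - 1) - max u2 (\<phi> t) powr (\<gamma> - 1)\<bar>
      \<le> (1 - \<gamma>) * \<phi> t powr (\<gamma> - 2) * \<bar>u1 - u2\<bar>" .
  have "\<bar>F t u1 - F t u2\<bar>
      = \<bar>\<beta> / 2 * (u1 - u2) + \<gamma> * (max u1 (\<phi> t) powr (\<gamma> - 1) - max u2 (\<phi> t) powr (\<gamma> - 1))\<bar>"
    unfolding F_def by (rule arg_cong[where f = abs]) (simp add: field_simps)
  also have "\<dots> \<le> \<beta> / 2 * \<bar>u1 - u2\<bar> + \<gamma> * ((1 - \<gamma>) * \<phi> t powr (\<gamma> - 2) * \<bar>u1 - u2\<bar>)"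
    using sing \<gamma>0 \<beta>_ge_1
    by (intro order.trans[OF abs_triangle_ineq] add_mono) (auto simp: abs_mult intro: mult_left_mono)
  finally show ?thesis by (simp add: algebra_simps)
qed

lemma F_continuous:
  assumes "continuous_on {0<..} U"
  shows "continuous_on {0<..} (\<lambda>t. F t (U t))"
proof -
  have "continuous_on {0<..} (\<lambda>t. max (U t) (\<phi> t) powr (\<gamma> - 1))"
  proof (rule continuous_on_powr)
    show "continuous_on {0<..} (\<lambda>t. max (U t) (\<phi> t))"
      using assms \<phi>_continuous by (rule continuous_on_max)
    show "\<forall>x\<in>{0<..}. max (U x) (\<phi> x) \<noteq> 0"
      using \<phi>_pos by (metis greaterThan_iff less_max_iff_disj order_less_irrefl)
  qed (rule continuous_on_const)
  then show ?thesis unfolding F_def using assms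
    by (intro continuous_on_mult continuous_on_add continuous_on_const)
qed

lemma \<rho>_F_continuous:
  assumes "continuous_on {0<..} U"
  shows "continuous_on {0<..} (\<lambda>t. \<rho> t * F t (U t))"
proof (rule continuous_on_mult)
  show "continuous_on {0<..} \<rho>" using \<rho>_continuous by (rule continuous_on_subset) auto
qed (rule F_continuous[OF assms])

lemma admissible_const_nonneg: assumes "admissible U D" shows "D \<ge> 0"
proof -
  have "\<bar>U \<delta>\<bar> \<le> D * w \<delta>" using assms \<delta> unfolding admissible_def by auto
  then have "0 \<le> D * w \<delta>" by linarith
  then show ?thesis using w_pos[OF \<delta>] by (simp add: zero_le_mult_iff)
qed

lemma admissible_continuous: "admissible U D \<Longrightarrow> continuous_on {0<..} U"
  unfolding admissible_def by auto

lemma admissible_F_abs_le: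
  assumes "admissible U D" "t \<in> {0<..x}"
  shows "\<bar>F t (U t)\<bar> \<le> c_sing * t powr q + c_sing * \<delta> powr q + \<beta> / 2 * D * x powr \<beta> * exp (K * t)"
proof -
  have t: "t > 0" "t \<le> x" using assms by auto
  have "\<bar>U t\<bar> \<le> D * w t" using assms t unfolding admissible_def by auto
  also have "\<dots> \<le> D * (x powr \<beta> * exp (K * t))" unfolding w_def
    using admissible_const_nonneg[OF assms(1)] t \<beta>_ge_1
      by (intro mult_left_mono mult_right_mono powr_mono2) auto
  finally have "\<beta> / 2 * \<bar>U t\<bar> \<le> \<beta> / 2 * (D * (x powr \<beta> * exp (K * t)))"
    using \<beta>_ge_1 by (intro mult_left_mono) auto
  then show ?thesis using F_abs_le[OF t(1), of "U t"] by (simp add: algebra_simps)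
qed

lemma \<rho>_F_integrable:
  assumes "admissible U D" "s \<ge> 0"
  shows "(\<lambda>t. \<rho> t * F t (U t)) integrable_on {0..s}"
proof (rule integrable_on_Icc_0_if_powr_bounded[OF _ _ q_gt_minus_1 assms(2)])
  show "continuous_on {0<..s} (\<lambda>t. \<rho> t * F t (U t))"
    by (rule continuous_on_subset[OF \<rho>_F_continuous[OF admissible_continuous[OF assms(1)]]]) auto
  show "\<bar>\<rho> t * F t (U t)\<bar> \<le> \<rho> s * (c_sing * \<delta> powr q + \<beta> / 2 * D * s powr \<beta> * exp (K * s))
      + \<rho> s * c_sing * t powr q" if t: "t \<in> {0<..s}" for t
  proof -
    have "\<beta> / 2 * D * s powr \<beta> * exp (K * t) \<le> \<beta> / 2 * D * s powr \<beta> * exp (K * s)"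
      using admissible_const_nonneg[OF assms(1)] \<beta>_ge_1 t K by (intro mult_left_mono) auto
    then have F_le: "\<bar>F t (U t)\<bar> \<le> c_sing * t powr q + c_sing * \<delta> powr q + \<beta> / 2 * D * s powr \<beta> * exp (K * s)"
      using admissible_F_abs_le[OF assms(1) t] by linarith
    have "\<bar>\<rho> t * F t (U t)\<bar> = \<rho> t * \<bar>F t (U t)\<bar>" using \<rho>_pos[of t] by (simp add: abs_mult)
    also have "\<dots> \<le> \<rho> s * \<bar>F t (U t)\<bar>" using \<rho>_mono[of t s] t by (intro mult_right_mono) auto
    also have "\<dots> \<le> \<rho> s * (c_sing * t powr q + c_sing * \<delta> powr q + \<beta> / 2 * D * s powr \<beta> * exp (K * s))"
      using F_le \<rho>_pos[of s] by (intro mult_left_mono) auto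
    finally show ?thesis by (simp add: algebra_simps)
  qed
qed

lemma flux_continuous: assumes "admissible U D" shows "continuous_on {0..X} (flux U)"
proof (cases "X \<ge> 0")
  case True
  show ?thesis unfolding flux_def
    by (rule indefinite_integral_continuous_1[OF \<rho>_F_integrable[OF assms True]])
qed auto

lemma T_integrand_continuous:
  assumes "admissible U D"
  shows "continuous_on {0..X} (\<lambda>s. (c0 * \<rho> 0 + flux U s) / \<rho> s)"
proof -
  have "continuous_on {0..X} \<rho>" by (rule continuous_on_subset[OF \<rho>_continuous]) auto
  then show ?thesis using flux_continuous[OF assms] \<rho>_pos by (intro continuous_intros) auto
qed

lemma T_continuous: assumes "admissible U D" shows "continuous_on {0..X} (T U)"
  unfolding T_def
    by (rule indefinite_integral_continuous_1[OF integrable_continuous_interval[OF T_integrand_continuous[OF assms]]])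

lemma T_isCont: assumes "admissible U D" "x > 0" shows "isCont (T U) x"
  using continuous_on_interior[OF T_continuous[OF assms(1), of "x + 1"]] assms(2) by simp

lemma T_continuous_on_nonneg: assumes "admissible U D" shows "continuous_on {0..} (T U)"
proof -
  have "continuous (at x within {0..}) (T U)" if "x \<ge> 0" for x
  proof -
    have "continuous (at x within {0..x+1}) (T U)"
      using T_continuous[OF assms, of "x+1"] that by (simp add: continuous_on_eq_continuous_within)
    moreover have "at x within {0..x+1} = at x within {0..}"
      by (intro at_within_nhd[of _ "{..<x+1}"]) auto
    ultimately show ?thesis by simp
  qed
  then show ?thesis by (simp add: continuous_on_eq_continuous_within)
qed

lemma flux_deriv:
  assumes "admissible U D" "x > 0"
  shows "(flux U has_real_derivative \<rho> x * F x (U x)) (at x)"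
proof -
  have "isCont (\<lambda>t. \<rho> t * F t (U t)) x"
    using \<rho>_F_continuous[OF admissible_continuous[OF assms(1)]] assms(2)
      by (simp add: continuous_on_eq_continuous_at)
  then have c: "continuous (at x within ({0..x+1} - {})) (\<lambda>t. \<rho> t * F t (U t))"
    by (simp add: continuous_at_imp_continuous_within)
  have "((\<lambda>u. integral {0..u} (\<lambda>t. \<rho> t * F t (U t))) has_vector_derivative \<rho> x * F x (U x)) (at x within ({0..x+1} - {}))"

      by (rule integral_has_vector_derivative_continuous_at[OF \<rho>_F_integrable[OF assms(1)] _ _ c]) (use assms in auto)
  moreover have "at x within ({0..x+1} - {}) = at x" using assms(2) by (intro at_within_interior) auto
  ultimately show ?thesis unfolding flux_def by (simp add: has_real_derivative_iff_has_vector_derivative)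
qed

lemma T_deriv:
  assumes "admissible U D" "x > 0"
  shows "(T U has_real_derivative (c0 * \<rho> 0 + flux U x) / \<rho> x) (at x)"
proof -
  have "(T U has_vector_derivative (c0 * \<rho> 0 + flux U x) / \<rho> x) (at x within {0..x+1})"
    unfolding T_def
      by (rule integral_has_vector_derivative[OF T_integrand_continuous[OF assms(1)]]) (use assms in auto)
  moreover have "at x within {0..x+1} = at x" using assms(2) by (intro at_within_interior) auto
  ultimately show ?thesis by (simp add: has_real_derivative_iff_has_vector_derivative)
qed

lemma square_le_w: assumes x: "x > 0" shows "x^2 \<le> w x"
proof -
  have "x powr (2 - \<beta>) \<le> exp (K * x)"
  proof (cases "x \<le> 1")
    case True
    then have "x powr (2 - \<beta>) \<le> 1 powr (2 - \<beta>)" using x \<beta>_le_2 by (intro powr_mono2) auto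
    then have "x powr (2 - \<beta>) \<le> 1" by simp
    also have "1 \<le> exp (K * x)" using x K by simp
    finally show ?thesis .
  next
    case False
    then have "x powr (2 - \<beta>) \<le> x powr 1" using \<beta>_ge_1 by (intro powr_mono) auto
    also have "\<dots> = x" using x by simp
    also have "x \<le> exp x" using exp_ge_add_one_self[of x] by linarith
    also have "exp x \<le> exp (K * x)" using K x by simp
    finally show ?thesis .
  qed
  then have "x powr \<beta> * x powr (2 - \<beta>) \<le> x powr \<beta> * exp (K * x)" by (intro mult_left_mono) auto
  moreover have "x powr \<beta> * x powr (2 - \<beta>) = x^2" using x by (simp add: powr_add[symmetric] powr_numeral)
  ultimately show ?thesis unfolding w_def by simp
qed

lemma abs_weighted_integral_le:
  fixes h g :: "real \<Rightarrow> real"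
  assumes s: "s \<ge> 0" and integrable: "(\<lambda>t. \<rho> t * h t) integrable_on {0..s}"
    and gi: "(g has_integral G) {0..s}"
    and hg: "\<And>t. t \<in> {0<..<s} \<Longrightarrow> \<bar>h t\<bar> \<le> g t"
  shows "\<bar>integral {0..s} (\<lambda>t. \<rho> t * h t)\<bar> \<le> \<rho> s * G"
proof -
  define I where "I = integral {0..s} (\<lambda>t. \<rho> t * h t)"
  have hI: "((\<lambda>t. \<rho> t * h t) has_integral I) {0<..<s}"
    using integrable unfolding I_def
      by (simp add: has_integral_Icc_iff_Ioo[symmetric] integrable_integral)
  have gI: "((\<lambda>t. \<rho> s * g t) has_integral \<rho> s * G) {0<..<s}"
    using has_integral_mult_right[OF gi] by (simp add: has_integral_Icc_iff_Ioo)
  have gI': "((\<lambda>t. - (\<rho> s * g t)) has_integral - (\<rho> s * G)) {0<..<s}"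
    using has_integral_neg[OF gI] .
  have b: "\<bar>\<rho> t * h t\<bar> \<le> \<rho> s * g t" if t: "t \<in> {0<..<s}" for t
  proof -
    have "\<bar>\<rho> t * h t\<bar> = \<rho> t * \<bar>h t\<bar>" using \<rho>_pos[of t] by (simp add: abs_mult)
    also have "\<dots> \<le> \<rho> t * g t" using hg[OF t] \<rho>_pos[of t] by (intro mult_left_mono) auto
    also have "\<dots> \<le> \<rho> s * g t" using hg[OF t] \<rho>_mono[of t s] t by (intro mult_right_mono) auto
    finally show ?thesis .
  qed
  have "I \<le> \<rho> s * G" by (rule has_integral_le[OF hI gI]) (use b in \<open>auto simp: abs_le_iff\<close>)
  moreover have "- (\<rho> s * G) \<le> I"
  proof (rule has_integral_le[OF gI' hI])
    fix t assume "t \<in> {0<..<s}"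
    from abs_le_D2[OF b[OF this]] show "- (\<rho> s * g t) \<le> \<rho> t * h t" by linarith
  qed
  ultimately show ?thesis unfolding I_def by auto
qed

lemma weighted_integral_ge:
  fixes h g :: "real \<Rightarrow> real"
  assumes s: "s \<ge> 0" and integrable: "(\<lambda>t. \<rho> t * h t) integrable_on {0..s}"
    and gi: "(g has_integral G) {0..s}"
    and hg: "\<And>t. t \<in> {0<..<s} \<Longrightarrow> 0 \<le> g t \<and> g t \<le> h t"
  shows "\<rho> 0 * G \<le> integral {0..s} (\<lambda>t. \<rho> t * h t)"
proof -
  define I where "I = integral {0..s} (\<lambda>t. \<rho> t * h t)"
  have hI: "((\<lambda>t. \<rho> t * h t) has_integral I) {0<..<s}"
    using integrable unfolding I_def
      by (simp add: has_integral_Icc_iff_Ioo[symmetric] integrable_integral)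
  have gI: "((\<lambda>t. \<rho> 0 * g t) has_integral \<rho> 0 * G) {0<..<s}"
    using has_integral_mult_right[OF gi] by (simp add: has_integral_Icc_iff_Ioo)
  have b: "\<rho> 0 * g t \<le> \<rho> t * h t" if t: "t \<in> {0<..<s}" for t
  proof -
    have "\<rho> 0 * g t \<le> \<rho> t * g t" using hg[OF t] \<rho>_mono[of 0 t] t by (intro mult_right_mono) auto
    also have "\<dots> \<le> \<rho> t * h t" using hg[OF t] \<rho>_pos[of t] by (intro mult_left_mono) auto
    finally show ?thesis .
  qed
  show ?thesis unfolding I_def[symmetric] by (rule has_integral_le[OF gI hI]) (use b in auto)
qed

lemma abs_T_integrand_le:
  assumes "s \<ge> 0"
  shows "\<bar>(c0 * \<rho> 0 + f) / \<rho> s\<bar> \<le> c0 + \<bar>f\<bar> / \<rho> s"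
proof -
  have "\<bar>(c0 * \<rho> 0 + f) / \<rho> s\<bar> = \<bar>c0 * \<rho> 0 + f\<bar> / \<rho> s" using \<rho>_pos[of s] by simp
  also have "\<dots> \<le> (c0 * \<rho> 0 + \<bar>f\<bar>) / \<rho> s"
    using abs_triangle_ineq[of "c0 * \<rho> 0" f] \<rho>_pos[of 0] \<rho>_pos[of s] c0_nonneg
    by (intro divide_right_mono) (auto simp: abs_mult)
  also have "\<dots> \<le> c0 + \<bar>f\<bar> / \<rho> s" using c0_weight_le[OF assms] by (simp add: add_divide_distrib)
  finally show ?thesis .
qed

definition "bound_const D = c0 + c_sing / ((q + 1) * (q + 2)) + c_sing * \<delta> powr q / 2 + \<beta> * D / (2 * K^2)"

lemma comparison_le_bound_const:
  assumes D: "D \<ge> 0" and x: "x > 0"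
  shows "c0 * x + (c_sing * (x powr (q + 2) / ((q + 1) * (q + 2))) + c_sing * \<delta> powr q * (x^2 / 2)
      + \<beta> / 2 * D * x powr \<beta> * ((exp (K * x) - 1) / K^2 - x / K)) \<le> bound_const D * w x"
proof -
  have c0_le: "c0 * x \<le> c0 * w x"
  proof (cases "\<gamma> = 0")
    case True
    then have "x = x powr \<beta>" using params_\<gamma>_0 x by simp
    also have "\<dots> \<le> w x" unfolding w_def using x K by simp
    finally show ?thesis using c0_nonneg by (intro mult_left_mono)
  qed (simp add: c0_def)
  have sing_le: "c_sing * (x powr (q + 2) / ((q + 1) * (q + 2))) \<le> c_sing / ((q + 1) * (q + 2)) * w x"
  proof (cases "\<gamma> = 0")
    case True then show ?thesis unfolding c_sing_def by simp
  next
    case False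
    then have "x powr (q + 2) \<le> w x" unfolding w_def q_def using x K by simp
    then show ?thesis using c_sing_nonneg q_gt_minus_1 by (simp add: divide_right_mono mult_left_mono)
  qed
  have const_le: "c_sing * \<delta> powr q * (x^2 / 2) \<le> c_sing * \<delta> powr q / 2 * w x"
    using square_le_w[OF x] c_sing_nonneg by (simp add: mult_left_mono)
  have "\<beta> / 2 * D * x powr \<beta> * ((exp (K * x) - 1) / K^2 - x / K) \<le> \<beta> / 2 * D * x powr \<beta> * (exp (K * x) / K^2)"
    using exp_second_primitive_le[of K x] K x D \<beta>_ge_1 by (intro mult_left_mono) auto
  also have "\<dots> = \<beta> * D / (2 * K^2) * w x" unfolding w_def by (simp add: field_simps)
  finally show ?thesis unfolding bound_const_def using c0_le sing_le const_le
    by (simp add: algebra_simps)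
qed

lemma T_abs_le:
  assumes U: "admissible U D" and x: "x > 0"
  shows "\<bar>T U x\<bar> \<le> bound_const D * w x"
proof -
  have K0: "K > 0" using K by simp
  define c2 where "c2 = c_sing * \<delta> powr q"
  define c3 where "c3 = \<beta> / 2 * D * x powr \<beta>"
  define G where "G = (\<lambda>s. c_sing * (s powr (q + 1) / (q + 1)) + c2 * s + c3 * ((exp (K * s) - 1) / K))"
  have G1: "((\<lambda>t. c_sing * t powr q + c2 + c3 * exp (K * t)) has_integral G s) {0..s}" if "s \<ge> 0" for s
    unfolding G_def by (rule iterated_integral_powr_const_exp(1)[OF q_gt_minus_1 K0 order.refl that])
  have G2: "(G has_integral (c_sing * (x powr (q + 2) / ((q + 1) * (q + 2))) + c2 * (x^2 / 2)
            + c3 * ((exp (K * x) - 1) / K^2 - x / K))) {0..x}"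
    unfolding G_def by (rule iterated_integral_powr_const_exp(2)[OF q_gt_minus_1 K0]) (use x in auto)
  have integrand_le: "\<bar>(c0 * \<rho> 0 + flux U s) / \<rho> s\<bar> \<le> c0 + G s" if s: "s \<in> {0..x}" for s
  proof -
    have "\<bar>flux U s\<bar> \<le> \<rho> s * G s" unfolding flux_def
      by (rule abs_weighted_integral_le[OF _ \<rho>_F_integrable[OF U] G1])
         (use s admissible_F_abs_le[OF U, of _ x] in \<open>auto simp: c2_def c3_def\<close>)
    then have "\<bar>flux U s\<bar> / \<rho> s \<le> G s" using \<rho>_pos[of s] by (simp add: divide_le_eq mult.commute)
    then show ?thesis using abs_T_integrand_le[of s "flux U s"] s by auto
  qed
  have "\<bar>T U x\<bar> \<le> integral {0..x} (\<lambda>s. c0 + G s)"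
    unfolding T_def
  proof (rule integral_norm_bound_integral[where 'a = real, unfolded real_norm_def])
    show "(\<lambda>s. (c0 * \<rho> 0 + flux U s) / \<rho> s) integrable_on {0..x}"
      by (rule integrable_continuous_interval[OF T_integrand_continuous[OF U]])
    show "(\<lambda>s. c0 + G s) integrable_on {0..x}"
      using G2 has_integral_const_Icc_0[of x c0] x by (intro integrable_add) auto
  qed (use integrand_le in auto)
  also have "integral {0..x} (\<lambda>s. c0 + G s) = c0 * x + (c_sing * (x powr (q + 2) / ((q + 1) * (q + 2)))
      + c2 * (x^2 / 2) + c3 * ((exp (K * x) - 1) / K^2 - x / K))"
    by (intro integral_unique has_integral_add has_integral_const_Icc_0 G2) (use x in auto)
  also have "\<dots> \<le> bound_const D * w x"
    unfolding c2_def c3_def by (rule comparison_le_bound_const[OF admissible_const_nonneg[OF U] x])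
  finally show ?thesis .
qed

lemma lip_sing_nonneg: "lip_sing \<eta> \<ge> 0" unfolding lip_sing_def using \<gamma>0 \<gamma>1 by simp
lemma lip_reg_ge: "lip_reg \<eta> \<delta> \<ge> \<beta> / 2" unfolding lip_reg_def using \<gamma>0 \<gamma>1 by simp

lemma lipschitz_weight_le: assumes t: "t > 0"
  shows "(\<beta> / 2 + \<gamma> * (1 - \<gamma>) * \<phi> t powr (\<gamma> - 2)) * w t
    \<le> lip_sing \<eta> * t powr q * exp (K * t) + lip_reg \<eta> \<delta> * w t"
proof (cases "t \<le> \<delta>")
  case True
  then have ph: "\<phi> t = exp (- \<eta>) * a * t powr \<beta>" unfolding \<phi>_def by simp
  have "\<phi> t powr (\<gamma> - 2) = (exp (- \<eta>) * a) powr (\<gamma> - 2) * (t powr \<beta>) powr (\<gamma> - 2)"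
    unfolding ph using a_pos t by (simp add: powr_mult)
  also have "(t powr \<beta>) powr (\<gamma> - 2) = t powr (- 2)" using \<beta>_times_\<gamma>_minus_2 by (simp add: powr_powr)
  finally have e: "\<gamma> * (1 - \<gamma>) * \<phi> t powr (\<gamma> - 2) * w t = lip_sing \<eta> * (t powr (- 2) * t powr \<beta>) * exp (K * t)"
    unfolding lip_sing_def w_def by (simp add: algebra_simps)
  have e2: "lip_sing \<eta> * (t powr (- 2) * t powr \<beta>) = lip_sing \<eta> * t powr q"
  proof (cases "\<gamma> = 0")
    case True then show ?thesis unfolding lip_sing_def by simp
  next
    case False
    then show ?thesis unfolding q_def using t by (simp add: powr_add[symmetric])
  qed
  have "\<beta> / 2 * w t \<le> lip_reg \<eta> \<delta> * w t" using lip_reg_ge w_pos[OF t] by (intro mult_right_mono) auto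
  moreover have "\<gamma> * (1 - \<gamma>) * \<phi> t powr (\<gamma> - 2) * w t = lip_sing \<eta> * t powr q * exp (K * t)"
    using e e2 by (metis mult.assoc)
  ultimately show ?thesis by (simp add: distrib_right)
next
  case False
  then have "\<phi> t = exp (- \<eta>) * a * \<delta> powr \<beta>" unfolding \<phi>_def by simp
  then have "\<beta> / 2 + \<gamma> * (1 - \<gamma>) * \<phi> t powr (\<gamma> - 2) = lip_reg \<eta> \<delta>" unfolding lip_reg_def by simp
  moreover have "lip_sing \<eta> * t powr q * exp (K * t) \<ge> 0" using lip_sing_nonneg by simp
  ultimately show ?thesis by simp
qed

lemma F_diff_le:
  assumes dU: "\<bar>U1 t - U2 t\<bar> \<le> \<Delta> * w t" and \<Delta>: "\<Delta> \<ge> 0" and t: "0 < t" "t \<le> x"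
  shows "\<bar>F t (U1 t) - F t (U2 t)\<bar>
    \<le> \<Delta> * lip_sing \<eta> * exp (K * x) * t powr q + \<Delta> * lip_reg \<eta> \<delta> * x powr \<beta> * exp (K * t)"
proof -
  have "\<bar>F t (U1 t) - F t (U2 t)\<bar> \<le> (\<beta> / 2 + \<gamma> * (1 - \<gamma>) * \<phi> t powr (\<gamma> - 2)) * \<bar>U1 t - U2 t\<bar>"
    by (rule F_lipschitz[OF t(1)])
  also have "\<dots> \<le> (\<beta> / 2 + \<gamma> * (1 - \<gamma>) * \<phi> t powr (\<gamma> - 2)) * (\<Delta> * w t)"
    using dU \<gamma>0 \<gamma>1 \<beta>_ge_1 by (intro mult_left_mono) auto
  also have "\<dots> = \<Delta> * ((\<beta> / 2 + \<gamma> * (1 - \<gamma>) * \<phi> t powr (\<gamma> - 2)) * w t)" by simp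
  also have "\<dots> \<le> \<Delta> * (lip_sing \<eta> * t powr q * exp (K * t) + lip_reg \<eta> \<delta> * w t)"
    using lipschitz_weight_le[OF t(1)] \<Delta> by (intro mult_left_mono) auto
  also have "\<dots> \<le> \<Delta> * (lip_sing \<eta> * t powr q * exp (K * x) + lip_reg \<eta> \<delta> * (x powr \<beta> * exp (K * t)))"
  proof -
    have "lip_sing \<eta> * t powr q * exp (K * t) \<le> lip_sing \<eta> * t powr q * exp (K * x)"
      using lip_sing_nonneg t K by (intro mult_left_mono) auto
    moreover have "lip_reg \<eta> \<delta> * w t \<le> lip_reg \<eta> \<delta> * (x powr \<beta> * exp (K * t))"
      unfolding w_def using lip_reg_ge \<beta>_ge_1 t by (intro mult_left_mono mult_right_mono powr_mono2) auto
    ultimately show ?thesis using \<Delta> by (intro mult_left_mono) auto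
  qed
  finally show ?thesis by (simp add: algebra_simps)
qed

definition "contr_const = lip_sing \<eta> / (\<beta> * (\<beta> - 1)) + lip_reg \<eta> \<delta> / K^2"

lemma comparison_le_contr_const:
  assumes \<Delta>: "\<Delta> \<ge> 0" and x: "x > 0"
  shows "\<Delta> * lip_sing \<eta> * exp (K * x) * (x powr (q + 2) / ((q + 1) * (q + 2)))
      + \<Delta> * lip_reg \<eta> \<delta> * x powr \<beta> * ((exp (K * x) - 1) / K^2 - x / K) \<le> contr_const * \<Delta> * w x"
proof -
  have sing_eq: "\<Delta> * lip_sing \<eta> * exp (K * x) * (x powr (q + 2) / ((q + 1) * (q + 2)))
      = \<Delta> * (lip_sing \<eta> / (\<beta> * (\<beta> - 1))) * w x"
  proof (cases "\<gamma> = 0")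
    case True then show ?thesis unfolding lip_sing_def by simp
  next
    case False
    then have "x powr (q + 2) = x powr \<beta>" "(q + 1) * (q + 2) = \<beta> * (\<beta> - 1)"
      unfolding q_def by (auto simp: algebra_simps)
    then show ?thesis unfolding w_def by simp
  qed
  have "\<Delta> * lip_reg \<eta> \<delta> * x powr \<beta> * ((exp (K * x) - 1) / K^2 - x / K)
      \<le> \<Delta> * lip_reg \<eta> \<delta> * x powr \<beta> * (exp (K * x) / K^2)"
    using exp_second_primitive_le[of K x] K x \<Delta> lip_reg_ge \<beta>_ge_1 by (intro mult_left_mono) auto
  also have "\<dots> = \<Delta> * (lip_reg \<eta> \<delta> / K^2) * w x" unfolding w_def by (simp add: field_simps)
  finally show ?thesis unfolding contr_const_def sing_eq by (simp add: algebra_simps)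
qed

lemma flux_diff_eq:
  assumes "admissible U1 D1" "admissible U2 D2" "s \<ge> 0"
  shows "flux U1 s - flux U2 s = integral {0..s} (\<lambda>t. \<rho> t * (F t (U1 t) - F t (U2 t)))"
    and "(\<lambda>t. \<rho> t * (F t (U1 t) - F t (U2 t))) integrable_on {0..s}"
  using integral_diff[OF \<rho>_F_integrable[OF assms(1,3)] \<rho>_F_integrable[OF assms(2,3)]]
    integrable_diff[OF \<rho>_F_integrable[OF assms(1,3)] \<rho>_F_integrable[OF assms(2,3)]]
  unfolding flux_def by (simp_all add: algebra_simps)

lemma T_diff_eq:
  assumes "admissible U1 D1" "admissible U2 D2"
  shows "T U1 x - T U2 x = integral {0..x} (\<lambda>s. (flux U1 s - flux U2 s) / \<rho> s)"
    and "(\<lambda>s. (flux U1 s - flux U2 s) / \<rho> s) integrable_on {0..x}"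
proof -
  have eq: "(\<lambda>s. (c0 * \<rho> 0 + flux U1 s) / \<rho> s - (c0 * \<rho> 0 + flux U2 s) / \<rho> s)
      = (\<lambda>s. (flux U1 s - flux U2 s) / \<rho> s)"
    by (rule ext) (simp add: add_divide_distrib diff_divide_distrib)
  note integrable = integrable_continuous_interval[OF T_integrand_continuous[OF assms(1)]]
    integrable_continuous_interval[OF T_integrand_continuous[OF assms(2)]]
  show "T U1 x - T U2 x = integral {0..x} (\<lambda>s. (flux U1 s - flux U2 s) / \<rho> s)"
    unfolding T_def using integral_diff[OF integrable] unfolding eq by simp
  show "(\<lambda>s. (flux U1 s - flux U2 s) / \<rho> s) integrable_on {0..x}"
    using integrable_diff[OF integrable] unfolding eq .
qed

lemma T_contraction:
  assumes U1: "admissible U1 D1" and U2: "admissible U2 D2"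
    and dU: "\<And>t. t > 0 \<Longrightarrow> \<bar>U1 t - U2 t\<bar> \<le> \<Delta> * w t" and x: "x > 0"
  shows "\<bar>T U1 x - T U2 x\<bar> \<le> contr_const * \<Delta> * w x"
proof -
  have "0 \<le> \<Delta> * w 1" using dU[of 1] by (meson abs_ge_zero order_trans zero_less_one)
  then have \<Delta>: "\<Delta> \<ge> 0" using w_pos[of 1] by (auto simp: zero_le_mult_iff)
  have K0: "K > 0" using K by simp
  define c1 where "c1 = \<Delta> * lip_sing \<eta> * exp (K * x)"
  define c3 where "c3 = \<Delta> * lip_reg \<eta> \<delta> * x powr \<beta>"
  define G where "G = (\<lambda>s. c1 * (s powr (q + 1) / (q + 1)) + 0 * s + c3 * ((exp (K * s) - 1) / K))"
  have G1: "((\<lambda>t. c1 * t powr q + 0 + c3 * exp (K * t)) has_integral G s) {0..s}" if "s \<ge> 0" for s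
    unfolding G_def by (rule iterated_integral_powr_const_exp(1)[OF q_gt_minus_1 K0 order.refl that])
  have G2: "(G has_integral (c1 * (x powr (q + 2) / ((q + 1) * (q + 2))) + 0 * (x^2 / 2)
            + c3 * ((exp (K * x) - 1) / K^2 - x / K))) {0..x}"
    unfolding G_def by (rule iterated_integral_powr_const_exp(2)[OF q_gt_minus_1 K0]) (use x in auto)
  have flux_diff_le: "\<bar>(flux U1 s - flux U2 s) / \<rho> s\<bar> \<le> G s" if s: "s \<in> {0..x}" for s
  proof -
    have s0: "s \<ge> 0" using s by auto
    have "\<bar>flux U1 s - flux U2 s\<bar> \<le> \<rho> s * G s"
      unfolding flux_diff_eq(1)[OF U1 U2 s0]
    proof (rule abs_weighted_integral_le[OF s0 flux_diff_eq(2)[OF U1 U2 s0] G1[OF s0]])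
      show "\<bar>F t (U1 t) - F t (U2 t)\<bar> \<le> c1 * t powr q + 0 + c3 * exp (K * t)" if "t \<in> {0<..<s}" for t
        using F_diff_le[of U1 t U2 \<Delta> x] dU[of t] \<Delta> that s unfolding c1_def c3_def by auto
    qed
    then show ?thesis using \<rho>_pos[of s] by (simp add: divide_le_eq mult.commute)
  qed
  have "\<bar>T U1 x - T U2 x\<bar> \<le> integral {0..x} G"
    unfolding T_diff_eq(1)[OF U1 U2]

      by (rule integral_norm_bound_integral[where 'a = real, unfolded real_norm_def, OF T_diff_eq(2)[OF U1 U2]])
       (use G2 flux_diff_le in auto)
  also have "integral {0..x} G = c1 * (x powr (q + 2) / ((q + 1) * (q + 2)))
      + c3 * ((exp (K * x) - 1) / K^2 - x / K)"
    using integral_unique[OF G2] by simp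
  also have "\<dots> \<le> contr_const * \<Delta> * w x"
    unfolding c1_def c3_def by (rule comparison_le_contr_const[OF \<Delta> x])
  finally show ?thesis .
qed

lemma sing_term_powr:
  assumes "c > 0" "t > 0"
  shows "\<gamma> * (c * t powr \<beta>) powr (\<gamma> - 1) = \<gamma> * c powr (\<gamma> - 1) * t powr q"
proof (cases "\<gamma> = 0")
  case False
  then show ?thesis unfolding q_def using assms \<beta>_times_\<gamma>_minus_1 by (simp add: powr_mult powr_powr)
qed simp

lemma leading_term_eq:
  assumes x: "x > 0"
  shows "c0 * x + \<gamma> * (exp m * a) powr (\<gamma> - 1) * (x powr (q + 2) / ((q + 1) * (q + 2)))
    = exp (- \<kappa> * m) * a * x powr \<beta>"
proof (cases "\<gamma> = 0")
  case True then show ?thesis using params_\<gamma>_0[OF True] x by simp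
next
  case False
  then have q: "x powr (q + 2) / ((q + 1) * (q + 2)) = x powr \<beta> / (\<beta> * (\<beta> - 1))"
    and ne: "\<beta> * (\<beta> - 1) \<noteq> 0"
    using \<beta>_gt_1 \<gamma>0 unfolding q_def by (auto simp: algebra_simps)
  have "exp m powr (\<gamma> - 1) = exp (m * (\<gamma> - 1))" by (simp add: powr_def)
  then have "(exp m * a) powr (\<gamma> - 1) = exp (m * (\<gamma> - 1)) * a powr (\<gamma> - 1)"
    using a_pos by (simp add: powr_mult)
  then have "\<gamma> * (exp m * a) powr (\<gamma> - 1) = exp (m * (\<gamma> - 1)) * (\<gamma> * a powr (\<gamma> - 1))" by simp
  also have "\<dots> = exp (- \<kappa> * m) * (a * (\<beta> * (\<beta> - 1)))"
    unfolding \<gamma>_times_a_powr \<kappa>_def using False by (simp add: algebra_simps)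
  finally have sing: "\<gamma> * (exp m * a) powr (\<gamma> - 1) = exp (- \<kappa> * m) * (a * (\<beta> * (\<beta> - 1)))" .
  have cancel: "B \<noteq> 0 \<Longrightarrow> c * (a' * B) * (y / B) = c * a' * y" for B c a' y :: real
    by (simp add: field_simps)
  show ?thesis unfolding q sing c0_def if_not_P[OF False] using cancel[OF ne] by simp
qed

lemma F_on_envelope:
  assumes M: "M \<le> \<eta>" and d: "d \<le> \<delta>" and env: "enveloped M d U" and t: "0 < t" "t \<le> d"
  shows "F t (U t) = \<beta> / 2 * U t + \<gamma> * U t powr (\<gamma> - 1)" and "U t > 0"
proof -
  have "\<phi> t = exp (- \<eta>) * a * t powr \<beta>" unfolding \<phi>_def using t d by simp
  also have "\<dots> \<le> exp (- M) * a * t powr \<beta>" using M a_pos by (intro mult_right_mono) auto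
  also have "\<dots> \<le> U t" using env t unfolding enveloped_def by auto
  finally have "\<phi> t \<le> U t" .
  then show "F t (U t) = \<beta> / 2 * U t + \<gamma> * U t powr (\<gamma> - 1)" unfolding F_def by (simp add: max_def)
  show "U t > 0" using \<phi>_pos[OF t(1)] \<open>\<phi> t \<le> U t\<close> by linarith
qed

lemma F_abs_le_on_envelope:
  assumes M: "M \<le> \<eta>" and d: "d \<le> \<delta>" and env: "enveloped M d U" and t: "0 < t" "t \<le> x" "x \<le> d"
  shows "\<bar>F t (U t)\<bar> \<le> \<gamma> * (exp (- M) * a) powr (\<gamma> - 1) * t powr q + \<beta> / 2 * exp M * a * x powr \<beta>"
proof -
  have td: "0 < t" "t \<le> d" using t by auto
  have bt: "exp (- M) * a * t powr \<beta> \<le> U t" "U t \<le> exp M * a * t powr \<beta>"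
    using env td unfolding enveloped_def by auto
  have "\<gamma> * U t powr (\<gamma> - 1) \<le> \<gamma> * (exp (- M) * a * t powr \<beta>) powr (\<gamma> - 1)"
    using bt(1) \<gamma>0 \<gamma>1 a_pos t by (intro mult_left_mono powr_mono2') auto
  also have "\<dots> = \<gamma> * (exp (- M) * a) powr (\<gamma> - 1) * t powr q"
    by (rule sing_term_powr) (use a_pos t in auto)
  finally have sing: "\<gamma> * U t powr (\<gamma> - 1) \<le> \<gamma> * (exp (- M) * a) powr (\<gamma> - 1) * t powr q" .
  have "\<beta> / 2 * U t \<le> \<beta> / 2 * (exp M * a * t powr \<beta>)" using bt(2) \<beta>_ge_1 by (intro mult_left_mono) auto
  also have "\<dots> \<le> \<beta> / 2 * (exp M * a * x powr \<beta>)"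
    using t \<beta>_ge_1 a_pos by (intro mult_left_mono powr_mono2) auto
  finally have "\<beta> / 2 * U t \<le> \<beta> / 2 * exp M * a * x powr \<beta>" by simp
  moreover have "0 \<le> \<beta> / 2 * U t + \<gamma> * U t powr (\<gamma> - 1)"
    using F_on_envelope(2)[OF M d env td] \<beta>_ge_1 \<gamma>0 by auto
  ultimately show ?thesis unfolding F_on_envelope(1)[OF M d env td] using sing by simp
qed

lemma F_ge_on_envelope:
  assumes M: "M \<le> \<eta>" and d: "d \<le> \<delta>" and env: "enveloped M d U" and t: "0 < t" "t \<le> d"
  shows "\<gamma> * (exp M * a) powr (\<gamma> - 1) * t powr q \<le> F t (U t)"
proof -
  have "\<gamma> * (exp M * a) powr (\<gamma> - 1) * t powr q = \<gamma> * (exp M * a * t powr \<beta>) powr (\<gamma> - 1)"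
    by (rule sing_term_powr[symmetric]) (use a_pos t in auto)
  also have "\<dots> \<le> \<gamma> * U t powr (\<gamma> - 1)"
    using env t F_on_envelope(2)[OF M d env t] \<gamma>0 \<gamma>1 unfolding enveloped_def
    by (intro mult_left_mono powr_mono2') auto
  moreover have "0 \<le> \<beta> / 2 * U t" using F_on_envelope(2)[OF M d env t] \<beta>_ge_1 by simp
  ultimately show ?thesis unfolding F_on_envelope(1)[OF M d env t] by linarith
qed

lemma T_le_envelope:
  assumes U: "admissible U D" and M: "M \<le> \<eta>" and d: "d \<le> \<delta>" and env: "enveloped M d U"
    and x: "0 < x" "x \<le> d"
  shows "T U x \<le> (exp (\<kappa> * M) + \<beta> * exp M * d^2 / 4) * a * x powr \<beta>"
proof -
  have K0: "K > 0" using K by simp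
  define c1 where "c1 = \<gamma> * (exp (- M) * a) powr (\<gamma> - 1)"
  define c2 where "c2 = \<beta> / 2 * exp M * a * x powr \<beta>"
  define G where "G = (\<lambda>s. c1 * (s powr (q + 1) / (q + 1)) + c2 * s + 0 * ((exp (K * s) - 1) / K))"
  have G1: "((\<lambda>t. c1 * t powr q + c2 + 0 * exp (K * t)) has_integral G s) {0..s}" if "s \<ge> 0" for s
    unfolding G_def by (rule iterated_integral_powr_const_exp(1)[OF q_gt_minus_1 K0 order.refl that])
  have G2: "((\<lambda>s. c0 + G s) has_integral (c0 * x + (c1 * (x powr (q + 2) / ((q + 1) * (q + 2)))
      + c2 * (x^2 / 2) + 0 * ((exp (K * x) - 1) / K^2 - x / K)))) {0..x}"
    unfolding G_def using x
    by (intro has_integral_add has_integral_const_Icc_0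
        iterated_integral_powr_const_exp(2)[OF q_gt_minus_1 K0, unfolded add.assoc[symmetric]]) auto
  have "T U x \<le> c0 * x + (c1 * (x powr (q + 2) / ((q + 1) * (q + 2))) + c2 * (x^2 / 2)
      + 0 * ((exp (K * x) - 1) / K^2 - x / K))"
    unfolding T_def
  proof (rule integral_le_has_integral[OF T_integrand_continuous[OF U] G2])
    fix s assume s: "s \<in> {0..x}"
    then have "\<bar>flux U s\<bar> \<le> \<rho> s * G s" unfolding flux_def
      by (intro abs_weighted_integral_le[OF _ \<rho>_F_integrable[OF U] G1])
         (use F_abs_le_on_envelope[OF M d env _ _ x(2)] in \<open>auto simp: c1_def c2_def\<close>)
    then have "flux U s / \<rho> s \<le> G s"
      using \<rho>_pos[of s] by (simp add: divide_le_eq mult.commute abs_le_iff)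
    then show "(c0 * \<rho> 0 + flux U s) / \<rho> s \<le> c0 + G s"
      using c0_weight_le[of s] s by (simp add: add_divide_distrib)
  qed
  also have "\<dots> = exp (\<kappa> * M) * a * x powr \<beta> + c2 * (x^2 / 2)"
    using leading_term_eq[OF x(1), of "- M"] unfolding c1_def by simp
  also have "c2 * (x^2 / 2) \<le> \<beta> * exp M * d^2 / 4 * a * x powr \<beta>"
  proof -
    have "x^2 \<le> d^2" using x by (intro power_mono) auto
    then have "c2 * (x^2 / 2) \<le> c2 * (d^2 / 2)"
      unfolding c2_def using \<beta>_ge_1 a_pos by (intro mult_left_mono) auto
    then show ?thesis unfolding c2_def by (simp add: algebra_simps)
  qed
  finally show ?thesis by (simp add: algebra_simps)
qed

lemma T_ge_envelope:
  assumes U: "admissible U D" and M: "M \<le> \<eta>" and d: "d \<le> \<delta>" and env: "enveloped M d U"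
    and x: "0 < x" "x \<le> d"
  shows "\<rho> 0 / \<rho> d * exp (- (\<kappa> * M)) * a * x powr \<beta> \<le> T U x"
proof -
  have K0: "K > 0" using K by simp
  define c1 where "c1 = \<gamma> * (exp M * a) powr (\<gamma> - 1)"
  define G where "G = (\<lambda>s. c1 * (s powr (q + 1) / (q + 1)) + 0 * s + 0 * ((exp (K * s) - 1) / K))"
  have G1: "((\<lambda>t. c1 * t powr q + 0 + 0 * exp (K * t)) has_integral G s) {0..s}" if "s \<ge> 0" for s
    unfolding G_def by (rule iterated_integral_powr_const_exp(1)[OF q_gt_minus_1 K0 order.refl that])
  have G2: "((\<lambda>s. \<rho> 0 / \<rho> d * (c0 + G s)) has_integral \<rho> 0 / \<rho> d * (c0 * x
      + (c1 * (x powr (q + 2) / ((q + 1) * (q + 2))) + 0 * (x^2 / 2) + 0 * ((exp (K * x) - 1) / K^2 - x / K)))) {0..x}"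
    unfolding G_def using x
    by (intro has_integral_mult_right has_integral_add has_integral_const_Icc_0
        iterated_integral_powr_const_exp(2)[OF q_gt_minus_1 K0, unfolded add.assoc[symmetric]]) auto
  have "\<rho> 0 / \<rho> d * (c0 * x + (c1 * (x powr (q + 2) / ((q + 1) * (q + 2))) + 0 * (x^2 / 2)
      + 0 * ((exp (K * x) - 1) / K^2 - x / K))) \<le> T U x"
    unfolding T_def
  proof (rule has_integral_le_integral[OF T_integrand_continuous[OF U] G2])
    fix s assume s: "s \<in> {0..x}"
    have "\<rho> 0 * G s \<le> flux U s" unfolding flux_def
      by (rule weighted_integral_ge[OF _ \<rho>_F_integrable[OF U] G1])
         (use s x q_gt_minus_1 F_ge_on_envelope[OF M d env] \<gamma>0 in \<open>auto simp: c1_def\<close>)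
    then have "\<rho> 0 * (c0 + G s) \<le> c0 * \<rho> 0 + flux U s" by (simp add: algebra_simps)
    moreover have "c0 + G s \<ge> 0" unfolding G_def c1_def using c0_nonneg \<gamma>0 s q_gt_minus_1 by simp
    moreover have "\<rho> s \<le> \<rho> d" using \<rho>_mono[of s d] s x by auto
    ultimately have "\<rho> 0 * (c0 + G s) / \<rho> d \<le> (c0 * \<rho> 0 + flux U s) / \<rho> s"
      using \<rho>_pos[of s] \<rho>_pos[of d] \<rho>_pos[of 0]

        by (meson divide_left_mono divide_right_mono mult_pos_pos order_trans mult_nonneg_nonneg less_imp_le)
    then show "\<rho> 0 / \<rho> d * (c0 + G s) \<le> (c0 * \<rho> 0 + flux U s) / \<rho> s" by simp
  qed
  moreover have "c0 * x + (c1 * (x powr (q + 2) / ((q + 1) * (q + 2))) + 0 * (x^2 / 2)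
      + 0 * ((exp (K * x) - 1) / K^2 - x / K)) = exp (- (\<kappa> * M)) * a * x powr \<beta>"
    using leading_term_eq[OF x(1), of M] unfolding c1_def by simp
  ultimately show ?thesis by (simp add: mult.assoc)
qed

text \<open>A profile \<open>U\<close> is encoded by the bounded continuous function \<open>H t = U (e\<^sup>t) / w (e\<^sup>t)\<close>, so that
  the sup distance of the codes is the weighted distance of the profiles.\<close>

definition "profile H x = (if 0 < x then w x * apply_bcontfun H (ln x) else 0)"
definition "lower t = exp (- \<eta>) * a * exp (- K * exp t)"
definition "upper t = exp \<eta> * a * exp (- K * exp t)"
definition "Dom = PiC UNIV (\<lambda>t. if t \<le> ln \<delta> then {lower t..upper t} else UNIV)"
definition "\<Phi> H = Bcontfun (\<lambda>t. T (profile H) (exp t) / w (exp t))"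

lemma profile_continuous: "continuous_on {0<..} (profile H)"
proof -
  have "continuous_on {0<..} (\<lambda>x. w x * apply_bcontfun H (ln x))"

      by (intro continuous_on_mult w_continuous continuous_on_compose2[OF continuous_on_apply_bcontfun[of UNIV H]] continuous_on_ln)
       auto
  then show ?thesis unfolding profile_def by (rule continuous_on_cong[THEN iffD1, rotated 2]) auto
qed

lemma admissible_profile:
  assumes H: "H \<in> Dom"
  shows "admissible (profile H) (norm H)"
  unfolding admissible_def enveloped_def
proof (intro conjI allI impI)
  show "continuous_on {0<..} (profile H)" by (rule profile_continuous)
  fix x :: real
  {
    assume x: "x > 0"
    have "\<bar>profile H x\<bar> = w x * \<bar>apply_bcontfun H (ln x)\<bar>"
      unfolding profile_def using x w_pos[OF x] by (simp add: abs_mult)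
    also have "\<dots> \<le> w x * norm H"
      using norm_bounded[of H "ln x"] w_pos[OF x] by (intro mult_left_mono) auto
    finally show "\<bar>profile H x\<bar> \<le> norm H * w x" by (simp add: mult.commute)
  }
  assume x: "0 < x \<and> x \<le> \<delta>"
  then have "ln x \<le> ln \<delta>" using \<delta> by simp
  moreover have "apply_bcontfun H (ln x) \<in> (if ln x \<le> ln \<delta> then {lower (ln x)..upper (ln x)} else UNIV)"
    using mem_PiCD[OF H[unfolded Dom_def]] by (auto simp: Pi_iff)
  ultimately have "apply_bcontfun H (ln x) \<in> {lower (ln x)..upper (ln x)}" by simp
  then have "w x * lower (ln x) \<le> profile H x \<and> profile H x \<le> w x * upper (ln x)"
    unfolding profile_def using x w_pos[of x] by (auto intro: mult_left_mono)
  moreover have "w x * lower (ln x) = exp (- \<eta>) * a * x powr \<beta>" "w x * upper (ln x) = exp \<eta> * a * x powr \<beta>"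
    unfolding lower_def upper_def using x w_mult_exp[of x] by (auto simp: algebra_simps)
  ultimately have both: "exp (- \<eta>) * a * x powr \<beta> \<le> profile H x \<and> profile H x \<le> exp \<eta> * a * x powr \<beta>"
    by simp
  then show "exp (- \<eta>) * a * x powr \<beta> \<le> profile H x" by simp
  from both show "profile H x \<le> exp \<eta> * a * x powr \<beta>" by simp
qed

lemma \<Phi>_bcontfun: assumes H: "H \<in> Dom"
  shows "(\<lambda>t. T (profile H) (exp t) / w (exp t)) \<in> bcontfun"
proof (rule bcontfun_normI)
  have U: "admissible (profile H) (norm H)" by (rule admissible_profile[OF H])
  have "continuous_on UNIV (\<lambda>t. T (profile H) (exp t))"
  proof (intro continuous_at_imp_continuous_on ballI)
    fix t :: real
    show "isCont (\<lambda>t. T (profile H) (exp t)) t"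
      by (rule isCont_o2[OF _ T_isCont[OF U]]) (auto intro!: continuous_intros)
  qed
  moreover have "continuous_on UNIV (\<lambda>t. w (exp t))"
    by (intro continuous_on_compose2[OF w_continuous]) (auto intro!: continuous_intros)
  ultimately show "continuous_on UNIV (\<lambda>t. T (profile H) (exp t) / w (exp t))"
    using w_pos by (intro continuous_on_divide) (auto simp: less_imp_neq[symmetric])
  fix t
  have "\<bar>T (profile H) (exp t)\<bar> \<le> bound_const (norm H) * w (exp t)" by (rule T_abs_le[OF U]) simp
  then show "norm (T (profile H) (exp t) / w (exp t)) \<le> bound_const (norm H)"
    using w_pos[of "exp t"] by (simp add: divide_le_eq)
qed

lemma \<Phi>_apply: "H \<in> Dom \<Longrightarrow> apply_bcontfun (\<Phi> H) t = T (profile H) (exp t) / w (exp t)"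
  unfolding \<Phi>_def using \<Phi>_bcontfun by (simp add: Bcontfun_inverse)

lemma \<Phi>_envelope: assumes H: "H \<in> Dom" and t: "t \<le> ln \<delta>"
  shows "apply_bcontfun (\<Phi> H) t \<in> {lower t..upper t}"
proof -
  define x where "x = exp t"
  have x: "0 < x" "x \<le> \<delta>"
    unfolding x_def using t \<delta> by (auto simp: ln_ge_iff[symmetric] exp_le_cancel_iff)
  have U: "admissible (profile H) (norm H)" by (rule admissible_profile[OF H])
  have env: "enveloped \<eta> \<delta> (profile H)" using U unfolding admissible_def by auto
  have T_ge: "exp (- \<eta>) * a * x powr \<beta> \<le> T (profile H) x"
  proof -
    have "exp (- \<eta>) = exp (- (1 - \<kappa>) * \<eta>) * exp (- (\<kappa> * \<eta>))"
      by (simp add: exp_add[symmetric] algebra_simps)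
    also have "\<dots> \<le> \<rho> 0 / \<rho> \<delta> * exp (- (\<kappa> * \<eta>))" using envelope_lower by (intro mult_right_mono) auto
    finally have "exp (- \<eta>) * (a * x powr \<beta>) \<le> \<rho> 0 / \<rho> \<delta> * exp (- (\<kappa> * \<eta>)) * (a * x powr \<beta>)"
      using a_pos by (intro mult_right_mono) auto
    then show ?thesis using T_ge_envelope[OF U order.refl order.refl env x] by (simp add: mult.assoc)
  qed
  have T_le: "T (profile H) x \<le> exp \<eta> * a * x powr \<beta>"
  proof -
    have "(exp (\<kappa> * \<eta>) + \<beta> * exp \<eta> * \<delta>^2 / 4) * (a * x powr \<beta>) \<le> exp \<eta> * (a * x powr \<beta>)"
      using envelope_upper a_pos by (intro mult_right_mono) auto
    then show ?thesis using T_le_envelope[OF U order.refl order.refl env x] by (simp add: mult.assoc)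
  qed
  have wx: "w x > 0" by (rule w_pos[OF x(1)])
  have "lower t = exp (- \<eta>) * a * x powr \<beta> / w x"
    unfolding lower_def x_def using w_mult_exp[of x] wx x_def
    by (simp add: field_simps)
  moreover have "upper t = exp \<eta> * a * x powr \<beta> / w x"
    unfolding upper_def x_def using w_mult_exp[of x] wx x_def
    by (simp add: field_simps)
  ultimately show "apply_bcontfun (\<Phi> H) t \<in> {lower t..upper t}"
    unfolding \<Phi>_apply[OF H] x_def[symmetric] using T_ge T_le wx by (auto intro: divide_right_mono)
qed

lemma \<Phi>_Dom: assumes H: "H \<in> Dom" shows "\<Phi> H \<in> Dom"
  unfolding Dom_def by (intro mem_PiCI Pi_I) (use \<Phi>_envelope[OF H] in auto)

lemma \<Phi>_contraction: assumes H1: "H1 \<in> Dom" and H2: "H2 \<in> Dom"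
  shows "dist (\<Phi> H1) (\<Phi> H2) \<le> contr_const * dist H1 H2"
proof (rule dist_bound)
  fix t :: real
  define x where "x = exp t"
  have x: "x > 0" unfolding x_def by simp
  have dU: "\<bar>profile H1 s - profile H2 s\<bar> \<le> dist H1 H2 * w s" if "s > 0" for s
  proof -
    have "\<bar>profile H1 s - profile H2 s\<bar> = w s * dist (apply_bcontfun H1 (ln s)) (apply_bcontfun H2 (ln s))"
      unfolding profile_def dist_real_def using that w_pos[OF that]
        by (simp add: abs_mult right_diff_distrib[symmetric])
    also have "\<dots> \<le> w s * dist H1 H2" using dist_bounded w_pos[OF that] by (intro mult_left_mono) auto
    finally show ?thesis by (simp add: mult.commute)
  qed
  have "\<bar>T (profile H1) x - T (profile H2) x\<bar> \<le> contr_const * dist H1 H2 * w x"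
    by (rule T_contraction[OF admissible_profile[OF H1] admissible_profile[OF H2] dU x])
  then show "dist (apply_bcontfun (\<Phi> H1) t) (apply_bcontfun (\<Phi> H2) t) \<le> contr_const * dist H1 H2"
    unfolding \<Phi>_apply[OF H1] \<Phi>_apply[OF H2] dist_real_def x_def[symmetric] using w_pos[OF x]
    by (simp add: diff_divide_distrib[symmetric] divide_le_eq)
qed

lemma closed_Dom: "closed Dom"
  unfolding Dom_def by (rule closed_PiC) auto

lemma Dom_nonempty: "Dom \<noteq> {}"
proof -
  have b: "(\<lambda>t. a * exp (- K * exp t)) \<in> bcontfun"
  proof (rule bcontfun_normI)
    show "continuous_on UNIV (\<lambda>t. a * exp (- K * exp t))" by (intro continuous_intros)
    fix t show "norm (a * exp (- K * exp t)) \<le> a" using a_pos K by (simp add: abs_mult)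
  qed
  have "apply_bcontfun (Bcontfun (\<lambda>t. a * exp (- K * exp t))) t \<in> {lower t..upper t}" for t
  proof -
    have "exp (- \<eta>) \<le> 1" "1 \<le> exp \<eta>" using \<eta> by auto
    then have "exp (- \<eta>) * (a * exp (- K * exp t)) \<le> 1 * (a * exp (- K * exp t))"
      "1 * (a * exp (- K * exp t)) \<le> exp \<eta> * (a * exp (- K * exp t))"
      using a_pos by (intro mult_right_mono; simp)+
    then show ?thesis unfolding lower_def upper_def Bcontfun_inverse[OF b] by (simp add: mult.assoc)
  qed
  then have "Bcontfun (\<lambda>t. a * exp (- K * exp t)) \<in> Dom" unfolding Dom_def by (intro mem_PiCI Pi_I) auto
  then show ?thesis by blast
qed

lemma contr_const_bounds: "0 \<le> contr_const" "contr_const < 1"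
proof -
  have "\<beta> * (\<beta> - 1) \<ge> 0" using \<beta>_ge_1 by simp
  then show "0 \<le> contr_const"
    unfolding contr_const_def using lip_sing_nonneg lip_reg_ge \<beta>_ge_1 by (intro add_nonneg_nonneg divide_nonneg_nonneg) auto
  show "contr_const < 1" unfolding contr_const_def using contraction .
qed

lemma fixpoint: "\<exists>H\<in>Dom. \<Phi> H = H"
proof -
  have "\<exists>!H\<in>Dom. \<Phi> H = H"
  proof (rule Banach_fix[OF _ _ contr_const_bounds])
    show "complete Dom" using closed_Dom by (simp add: complete_eq_closed)
    show "Dom \<noteq> {}" by (rule Dom_nonempty)
    show "\<Phi> ` Dom \<subseteq> Dom" using \<Phi>_Dom by auto
  qed (rule \<Phi>_contraction)
  then show ?thesis by auto
qed

end

locale fixed_point_solution = truncated_problem +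
  fixes H
  assumes H_Dom: "H \<in> Dom" and H_fixed: "\<Phi> H = H"
begin

definition "V = profile H"
definition "V' x = (c0 * \<rho> 0 + flux V x) / \<rho> x"
definition "V'' x = F x (V x) - ((real n - 1) / (R + x) + (R + x) / 2) * V' x"

lemma V_admissible: "admissible V (norm H)" unfolding V_def by (rule admissible_profile[OF H_Dom])

lemma V_0: "V 0 = 0" unfolding V_def profile_def by simp

lemma T_V: assumes "x \<ge> 0" shows "T V x = V x"
proof (cases "x = 0")
  case True then show ?thesis using V_0 by (simp add: T_def)
next
  case False
  then have x: "x > 0" using assms by simp
  have "apply_bcontfun (\<Phi> H) (ln x) = apply_bcontfun H (ln x)" using H_fixed by simp
  then have "T V x / w x = apply_bcontfun H (ln x)" unfolding \<Phi>_apply[OF H_Dom] V_def using x by simp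
  then show ?thesis unfolding V_def profile_def using x w_pos[OF x]
    by (simp add: divide_eq_eq mult.commute)
qed

lemma V_continuous: "continuous_on {0..} V"
  using T_continuous_on_nonneg[OF V_admissible]
    by (rule continuous_on_cong[THEN iffD1, rotated 2]) (auto simp: T_V)

lemma V_envelope: "0 < x \<Longrightarrow> x \<le> \<delta> \<Longrightarrow> exp (- \<eta>) * a * x powr \<beta> \<le> V x \<and> V x \<le> exp \<eta> * a * x powr \<beta>"
  using V_admissible unfolding admissible_def enveloped_def by auto

lemma V_deriv: assumes x: "x > 0" shows "(V has_real_derivative V' x) (at x)"
  unfolding V'_def
proof (rule has_field_derivative_transform_within_open[OF T_deriv[OF V_admissible x], of "{0<..}"])
  show "\<And>y. y \<in> {0<..} \<Longrightarrow> T V y = V y" using T_V by auto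
qed (use x in auto)

lemma V'_deriv:
  assumes x: "x > 0"
  shows "(V' has_real_derivative V'' x) (at x)"
proof -
  define k where "k = (real n - 1) / (R + x) + (R + x) / 2"
  have flux: "((\<lambda>x. c0 * \<rho> 0 + flux V x) has_real_derivative \<rho> x * F x (V x)) (at x)"
    using DERIV_add[OF DERIV_const flux_deriv[OF V_admissible x]] by simp
  have "x > - R" using x R by simp
  from DERIV_divide[OF flux \<rho>_deriv[OF this] \<rho>_nonzero, folded k_def]
  have "(V' has_real_derivative
      (\<rho> x * F x (V x) * \<rho> x - (c0 * \<rho> 0 + flux V x) * (\<rho> x * k)) / (\<rho> x * \<rho> x)) (at x)"
    unfolding V'_def .
  moreover have "(p * f * p - A * (p * k)) / (p * p) = f - k * (A / p)" if "p \<noteq> 0" for p f A :: real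
    using that by (simp add: field_simps)
  ultimately show ?thesis unfolding V''_def V'_def k_def by simp
qed

lemma V'_continuous: "continuous_on {0<..} V'"
proof -
  have "continuous_on {0..X} V'" for X unfolding V'_def by (rule T_integrand_continuous[OF V_admissible])
  then have "isCont V' x" if "x > 0" for x
    using continuous_on_interior[of "{0..x+1}" V' x] that by auto
  then show ?thesis by (intro continuous_at_imp_continuous_on) auto
qed

lemma V''_continuous: "continuous_on {0<..} V''"
  unfolding V''_def using R

    by (intro continuous_intros F_continuous[OF admissible_continuous[OF V_admissible]] V'_continuous continuous_on_id) auto

lemma flux_pos: assumes x: "x > 0" and pos: "\<And>t. 0 < t \<Longrightarrow> t < x \<Longrightarrow> V t > 0" shows "flux V x > 0"
proof -
  have "flux V 0 < flux V x"
  proof (rule DERIV_pos_imp_increasing_open[OF x])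
    fix t assume t: "0 < t" "t < x"
    have "F t (V t) > 0"
    proof -
      have "\<beta> / 2 * V t > 0" using pos[OF t] \<beta>_ge_1 by simp
      moreover have "\<gamma> * max (V t) (\<phi> t) powr (\<gamma> - 1) \<ge> 0" using \<gamma>0 by simp
      ultimately show ?thesis unfolding F_def by linarith
    qed
    then show "\<exists>y. (flux V has_real_derivative y) (at t) \<and> 0 < y"
      using flux_deriv[OF V_admissible t(1)] \<rho>_pos[of t] by (intro exI[of _ "\<rho> t * F t (V t)"]) auto
  next
    show "continuous_on {0..x} (flux V)" by (rule flux_continuous[OF V_admissible])
  qed
  then show ?thesis unfolding flux_def by simp
qed

lemma V'_pos_if_V_pos: assumes x: "x > 0" and pos: "\<And>t. 0 < t \<Longrightarrow> t < x \<Longrightarrow> V t > 0" shows "V' x > 0"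
proof -
  have "c0 * \<rho> 0 \<ge> 0" unfolding c0_def using \<rho>_pos[of 0] by simp
  then show ?thesis unfolding V'_def using flux_pos[OF x pos] \<rho>_pos[of x] by (intro divide_pos_pos) auto
qed

text \<open>If \<open>V\<close> had a zero, take the first point \<open>s \<ge> \<delta>\<close> with \<open>V s \<le> 0\<close>: as \<open>V > 0\<close> on \<open>(0, s)\<close>, also
  \<open>V' > 0\<close> there, so \<open>V s > V \<delta> > 0\<close>.\<close>

lemma V_pos: assumes x: "x > 0" shows "V x > 0"
proof (rule ccontr)
  assume "\<not> V x > 0"
  then have Vx: "V x \<le> 0" by simp
  have Vd: "V t > 0" if "0 < t" "t \<le> \<delta>" for t
  proof -
    have "0 < exp (- \<eta>) * a * t powr \<beta>" using a_pos that by simp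
    then show ?thesis using V_envelope[OF that] by linarith
  qed
  then have xd: "x > \<delta>" using x Vx by force
  define Z where "Z = {t \<in> {\<delta>..x}. V t \<le> 0}"
  have Zc: "compact Z"
  proof -
    have "continuous_on {\<delta>..x} V" by (rule continuous_on_subset[OF V_continuous]) (use \<delta> in auto)
    moreover have "Z = {\<delta>..x} \<inter> V -` {..0}" unfolding Z_def by auto
    ultimately have "closed Z" using continuous_closed_preimage[of "{\<delta>..x}" V "{..0}"] by auto
    moreover have "bounded Z" unfolding Z_def by (rule bounded_subset[of "{\<delta>..x}"]) auto
    ultimately show ?thesis by (simp add: compact_eq_bounded_closed)
  qed
  have Zne: "Z \<noteq> {}" unfolding Z_def using xd Vx by auto
  obtain s where s: "s \<in> Z" "\<And>t. t \<in> Z \<Longrightarrow> s \<le> t"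
    using compact_attains_inf[OF Zc Zne] by blast
  have s1: "\<delta> \<le> s" "s \<le> x" "V s \<le> 0" using s(1) unfolding Z_def by auto
  have sd: "s > \<delta>" using s1 Vd[OF \<delta> order.refl] by (cases "s = \<delta>") auto
  have posb: "V t > 0" if "0 < t" "t < s" for t
  proof (cases "t \<le> \<delta>")
    case True then show ?thesis using Vd that by auto
  next
    case False
    then have "t \<notin> Z" using s(2)[of t] that by force
    then show ?thesis unfolding Z_def using False that s1 by auto
  qed
  have "V \<delta> < V s"
  proof (rule DERIV_pos_imp_increasing_open[OF sd])
    fix t assume t: "\<delta> < t" "t < s"
    have tp: "t > 0" using t \<delta> by simp
    show "\<exists>y. (V has_real_derivative y) (at t) \<and> 0 < y"
      using V_deriv[OF tp] V'_pos_if_V_pos[OF tp] posb t by (intro exI[of _ "V' t"]) auto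
  next
    show "continuous_on {\<delta>..s} V" by (rule continuous_on_subset[OF V_continuous]) (use \<delta> in auto)
  qed
  then show False using Vd[OF \<delta> order.refl] s1 by linarith
qed

lemma V'_pos: "x > 0 \<Longrightarrow> V' x > 0" using V'_pos_if_V_pos V_pos by blast

lemma V_strict_mono: assumes "0 < x" "x < y" shows "V x < V y"
proof (rule DERIV_pos_imp_increasing_open[OF assms(2)])
  fix t assume t: "x < t" "t < y"
  then show "\<exists>z. (V has_real_derivative z) (at t) \<and> 0 < z"
    using V_deriv V'_pos assms by (intro exI[of _ "V' t"]) auto
next
  show "continuous_on {x..y} V" by (rule continuous_on_subset[OF V_continuous]) (use assms in auto)
qed

lemma F_eq_untruncated: assumes x: "x > 0" shows "F x (V x) = \<beta> / 2 * V x + \<gamma> * V x powr (\<gamma> - 1)"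
proof -
  have "\<phi> x \<le> V x"
  proof (cases "x \<le> \<delta>")
    case True then show ?thesis unfolding \<phi>_def using V_envelope[OF x True] by simp
  next
    case False
    then have "\<phi> x = exp (- \<eta>) * a * \<delta> powr \<beta>" unfolding \<phi>_def by simp
    also have "\<dots> \<le> V \<delta>" using V_envelope[OF \<delta> order.refl] by simp
    also have "\<dots> \<le> V x" using V_strict_mono[OF \<delta>, of x] False by simp
    finally show ?thesis .
  qed
  then show ?thesis unfolding F_def by (simp add: max_def)
qed

lemma V_ode: assumes x: "x > 0"
  shows "V'' x + ((real n - 1) / (R + x) + (R + x) / 2) * V' x - \<beta> / 2 * V x = \<gamma> * V x powr (\<gamma> - 1)"
  unfolding V''_def F_eq_untruncated[OF x] by simp

subsection \<open>Behaviour at the boundary\<close>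

definition "log_ratio x = ln (V x / (a * x powr \<beta>))"
definition "log_ratio_bound d = max (- ln (\<rho> 0 / \<rho> d)) (\<beta> * exp \<eta> / 4 * d^2)"

lemma V_eq_exp_log_ratio: assumes x: "x > 0" shows "V x = exp (log_ratio x) * a * x powr \<beta>"
proof -
  have "V x / (a * x powr \<beta>) > 0" using V_pos[OF x] a_pos x by simp
  then show ?thesis unfolding log_ratio_def using a_pos x by (simp add: field_simps)
qed

lemma enveloped_iff_abs_log_ratio_le:
  "enveloped M d V \<longleftrightarrow> (\<forall>x. 0 < x \<and> x \<le> d \<longrightarrow> \<bar>log_ratio x\<bar> \<le> M)"
proof -
  have "exp (- M) * a * x powr \<beta> \<le> V x \<and> V x \<le> exp M * a * x powr \<beta> \<longleftrightarrow> \<bar>log_ratio x\<bar> \<le> M"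
    if "x > 0" for x
  proof -
    have "a * x powr \<beta> > 0" using a_pos that by simp
    then show ?thesis
      unfolding V_eq_exp_log_ratio[OF that]
        by (auto simp: mult.assoc mult_le_cancel_right_pos abs_le_iff)
  qed
  then show ?thesis unfolding enveloped_def by auto
qed

lemma abs_log_ratio_le_contracted:
  assumes env: "enveloped M d V" and M: "0 \<le> M" "M \<le> \<eta>" and d: "0 < d" "d \<le> \<delta>" and y: "0 < y" "y \<le> d"
  shows "\<bar>log_ratio y\<bar> \<le> \<kappa> * M + log_ratio_bound d"
proof -
  have p: "a * y powr \<beta> > 0" using a_pos y by simp
  have V_y: "V y = exp (log_ratio y) * (a * y powr \<beta>)" using V_eq_exp_log_ratio[OF y(1)] by simp
  have "exp (ln (\<rho> 0 / \<rho> d) - \<kappa> * M) * (a * y powr \<beta>) \<le> exp (log_ratio y) * (a * y powr \<beta>)"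
    using T_ge_envelope[OF V_admissible M(2) d(2) env y] T_V[of y] y \<rho>_pos[of 0] \<rho>_pos[of d]
    unfolding V_y by (simp add: exp_diff exp_minus field_simps)
  then have "ln (\<rho> 0 / \<rho> d) - \<kappa> * M \<le> log_ratio y" using p by (simp add: mult_le_cancel_right_pos)
  moreover have "log_ratio y \<le> \<kappa> * M + \<beta> * exp \<eta> / 4 * d^2"
  proof -
    have "exp (log_ratio y) * (a * y powr \<beta>) \<le> (exp (\<kappa> * M) + \<beta> * exp M * d^2 / 4) * (a * y powr \<beta>)"
      using T_le_envelope[OF V_admissible M(2) d(2) env y] T_V[of y] y unfolding V_y
        by (simp add: mult.assoc)
    then have "exp (log_ratio y) \<le> exp (\<kappa> * M) + \<beta> * exp M * d^2 / 4"
      using p by (simp add: mult_le_cancel_right_pos)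
    also have "\<dots> \<le> exp (\<kappa> * M) + exp (\<kappa> * M) * (\<beta> * exp \<eta> / 4 * d^2)"
    proof -
      have "0 \<le> \<kappa> * M" using M \<kappa> by simp
      then have "exp M \<le> exp (\<kappa> * M) * exp \<eta>" using M by (simp add: exp_add[symmetric])
      then have "\<beta> * exp M * d^2 / 4 \<le> \<beta> * (exp (\<kappa> * M) * exp \<eta>) * d^2 / 4"
        using \<beta>_ge_1 by (intro divide_right_mono mult_right_mono mult_left_mono) auto
      then show ?thesis by (simp add: algebra_simps)
    qed
    also have "\<dots> = exp (\<kappa> * M) * (1 + \<beta> * exp \<eta> / 4 * d^2)" by (simp add: algebra_simps)
    also have "\<dots> \<le> exp (\<kappa> * M) * exp (\<beta> * exp \<eta> / 4 * d^2)"
      using exp_ge_add_one_self[of "\<beta> * exp \<eta> / 4 * d^2"] by (intro mult_left_mono) auto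
    also have "\<dots> = exp (\<kappa> * M + \<beta> * exp \<eta> / 4 * d^2)" by (simp add: exp_add)
    finally show ?thesis by simp
  qed
  ultimately show ?thesis unfolding log_ratio_bound_def by (auto simp: abs_le_iff)
qed

lemma abs_log_ratio_le_bound:
  assumes d: "0 < d" "d \<le> \<delta>" and x: "0 < x" "x \<le> d"
  shows "\<bar>log_ratio x\<bar> \<le> log_ratio_bound d / (1 - \<kappa>)"
proof -
  define M where "M = Sup ((\<lambda>t. \<bar>log_ratio t\<bar>) ` {0<..d})"
  have "enveloped \<eta> \<delta> V" using V_admissible unfolding admissible_def by auto
  then have \<eta>_bound: "\<bar>log_ratio t\<bar> \<le> \<eta>" if "0 < t" "t \<le> \<delta>" for t
    using that unfolding enveloped_iff_abs_log_ratio_le by auto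
  have bdd: "bdd_above ((\<lambda>t. \<bar>log_ratio t\<bar>) ` {0<..d})"
    by (rule bdd_aboveI[of _ \<eta>]) (use \<eta>_bound d in auto)
  have le_M: "\<bar>log_ratio t\<bar> \<le> M" if "t \<in> {0<..d}" for t
    unfolding M_def using bdd that by (intro cSup_upper) auto
  have "M \<le> \<eta>" unfolding M_def using d \<eta>_bound by (intro cSup_least) auto
  moreover have "0 \<le> M" using le_M[of d] d by auto
  moreover have "enveloped M d V" unfolding enveloped_iff_abs_log_ratio_le using le_M by auto
  ultimately have "Sup ((\<lambda>t. \<bar>log_ratio t\<bar>) ` {0<..d}) \<le> \<kappa> * M + log_ratio_bound d"
    using abs_log_ratio_le_contracted d by (intro cSup_least) auto
  then have "M \<le> \<kappa> * M + log_ratio_bound d" unfolding M_def[symmetric] .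
  then have "M \<le> log_ratio_bound d / (1 - \<kappa>)" using \<kappa> by (simp add: field_simps)
  then show ?thesis using le_M[of x] x by auto
qed

lemma log_ratio_tendsto_0: "(log_ratio \<longlongrightarrow> 0) (at_right 0)"
proof -
  have "((\<lambda>d. log_ratio_bound d / (1 - \<kappa>)) \<longlongrightarrow> max (- ln (\<rho> 0 / \<rho> 0)) (\<beta> * exp \<eta> / 4 * 0^2) / (1 - \<kappa>)) (at_right 0)"
    unfolding log_ratio_bound_def using \<rho>_pos[of 0] \<kappa>(2)
    by (intro tendsto_intros \<rho>_tendsto) auto
  moreover have "1 - \<kappa> \<noteq> 0" using \<kappa>(2) by simp
  ultimately have El: "((\<lambda>d. log_ratio_bound d / (1 - \<kappa>)) \<longlongrightarrow> 0) (at_right 0)" using \<rho>_pos[of 0] by simp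
  have "((\<lambda>x. \<bar>log_ratio x\<bar>) \<longlongrightarrow> 0) (at_right 0)"
  proof (rule tendsto_sandwich[OF _ _ tendsto_const El])
    show "\<forall>\<^sub>F x in at_right 0. 0 \<le> \<bar>log_ratio x\<bar>" by simp
    have "\<forall>\<^sub>F x in at_right (0::real). 0 < x \<and> x < \<delta>"
      unfolding eventually_at_right_field using \<delta> by (auto intro!: exI[of _ \<delta>])
    then show "\<forall>\<^sub>F x in at_right 0. \<bar>log_ratio x\<bar> \<le> log_ratio_bound x / (1 - \<kappa>)"
      by eventually_elim (use abs_log_ratio_le_bound in auto)
  qed
  then show ?thesis by (simp add: tendsto_rabs_zero_iff)
qed

lemma V_boundary_slope: "((\<lambda>x. V x powr (1 / \<beta>) / x) \<longlongrightarrow> sqrt 2 / \<beta>) (at_right 0)"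
proof -
  have "((\<lambda>x. (exp (log_ratio x) * a) powr (1 / \<beta>)) \<longlongrightarrow> (exp 0 * a) powr (1 / \<beta>)) (at_right 0)"
    using a_pos by (intro tendsto_intros log_ratio_tendsto_0) auto
  moreover have "(exp 0 * a) powr (1 / \<beta>) = sqrt 2 / \<beta>"
    unfolding a_def using \<beta>_ge_1 by (simp add: powr_powr)
  moreover have "\<forall>\<^sub>F x in at_right 0. (exp (log_ratio x) * a) powr (1 / \<beta>) = V x powr (1 / \<beta>) / x"
  proof -
    have "\<forall>\<^sub>F x in at_right (0::real). x > 0" by (rule eventually_at_right_less)
    then show ?thesis
    proof eventually_elim
      case (elim x)
      have "V x powr (1 / \<beta>) = (exp (log_ratio x) * a) powr (1 / \<beta>) * (x powr \<beta>) powr (1 / \<beta>)"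
        using V_eq_exp_log_ratio[OF elim] a_pos elim by (simp add: powr_mult mult.assoc)
      also have "(x powr \<beta>) powr (1 / \<beta>) = x" using elim \<beta>_ge_1 by (simp add: powr_powr)
      finally show ?case using elim by simp
    qed
  qed
  ultimately show ?thesis by (simp add: tendsto_cong)
qed

lemma shifted_solution:
  defines "U \<equiv> \<lambda>r. V (r - R)" and "U' \<equiv> \<lambda>r. V' (r - R)" and "U'' \<equiv> \<lambda>r. V'' (r - R)"
  shows "continuous_on {R..} U \<and>
       (\<forall>r>R. (U has_real_derivative U' r) (at r) \<and> (U' has_real_derivative U'' r) (at r)) \<and>
       continuous_on {R<..} U'' \<and>
       (\<forall>r>R. U r > 0) \<and> strict_mono_on {R<..} U \<and>
       (\<forall>r>R. U'' r + ((real n - 1) / r + r / 2) * U' r - \<beta> / 2 * U r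
               = \<gamma> * U r powr (\<gamma> - 1)) \<and>
       U R = 0 \<and>
       ((\<lambda>r. U r powr (1 / \<beta>) / (r - R)) \<longlongrightarrow> sqrt 2 / \<beta>) (at_right R) \<and>
       (\<exists>c>0. ((\<lambda>r. U r / r powr \<beta>) \<longlongrightarrow> c) at_top)"
proof -
  have shift: "((\<lambda>r. f (r - R)) has_real_derivative f' (r - R)) (at r)"
    if "(f has_real_derivative f' (r - R)) (at (r - R))" for f f' :: "real \<Rightarrow> real" and r
  proof -
    have "((\<lambda>r. r - R) has_real_derivative 1) (at r)" by (auto intro!: derivative_eq_intros)
    from DERIV_chain2[OF that this] show ?thesis by simp
  qed
  have U_deriv: "(U has_real_derivative U' r) (at r)" if "r > R" for r
    unfolding U_def U'_def by (rule shift, rule V_deriv) (use that in simp)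
  have U'_deriv: "(U' has_real_derivative U'' r) (at r)" if "r > R" for r
    unfolding U'_def U''_def by (rule shift, rule V'_deriv) (use that in simp)
  have U_pos: "U r > 0" if "r > R" for r unfolding U_def using V_pos that by simp
  have ode: "U'' r + ((real n - 1) / r + r / 2) * U' r - \<beta> / 2 * U r = \<gamma> * U r powr (\<gamma> - 1)"
    if "r > R" for r unfolding U_def U'_def U''_def using V_ode[of "r - R"] that by simp
  interpret growth: increasing_solution n \<beta> \<gamma> R U U' U''
    using R \<beta>_ge_1 \<gamma>0 \<gamma>1 n U_deriv U'_deriv U_pos ode V'_pos
    by unfold_locales (auto simp: U'_def less_imp_le)
  have "continuous_on {R..} U" unfolding U_def
    by (rule continuous_on_compose2[OF V_continuous]) (auto intro!: continuous_intros)
  moreover have "continuous_on {R<..} U''" unfolding U''_def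
    by (rule continuous_on_compose2[OF V''_continuous]) (auto intro!: continuous_intros)
  moreover have "strict_mono_on {R<..} U" unfolding U_def
    by (rule strict_mono_onI) (use V_strict_mono in auto)
  moreover have "((\<lambda>r. U r powr (1 / \<beta>) / (r - R)) \<longlongrightarrow> sqrt 2 / \<beta>) (at_right R)"
    unfolding filterlim_at_right_to_0[of _ _ R] U_def using V_boundary_slope by simp
  ultimately show ?thesis using U_deriv U'_deriv U_pos ode growth.W_tendsto V_0 unfolding U_def by auto
qed

end

section \<open>Choice of the parameters\<close>

context profile_ode
begin

lemma lip_sing_eq: "lip_sing \<eta> / (\<beta> * (\<beta> - 1)) = \<kappa> * exp ((2 - \<gamma>) * \<eta>)"
proof (cases "\<gamma> = 0")
  case True then show ?thesis unfolding lip_sing_def \<kappa>_def by simp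
next
  case False
  have "a powr (\<gamma> - 2) = a powr (\<gamma> - 1) / a" using powr_diff[of a "\<gamma> - 1" 1] a_pos by simp
  then have sing: "\<gamma> * a powr (\<gamma> - 2) = \<beta> * (\<beta> - 1)" using \<gamma>_times_a_powr a_pos by simp
  have "exp (- \<eta>) powr (\<gamma> - 2) = exp ((2 - \<gamma>) * \<eta>)" by (simp add: powr_def algebra_simps)
  then have "(exp (- \<eta>) * a) powr (\<gamma> - 2) = exp ((2 - \<gamma>) * \<eta>) * a powr (\<gamma> - 2)"
    using a_pos by (simp add: powr_mult)
  then have "lip_sing \<eta> = (1 - \<gamma>) * exp ((2 - \<gamma>) * \<eta>) * (\<gamma> * a powr (\<gamma> - 2))"
    unfolding lip_sing_def by (simp only: mult_ac)
  moreover have "\<beta> * (\<beta> - 1) \<noteq> 0" using \<beta>_gt_1 False \<gamma>0 by simp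
  ultimately show ?thesis unfolding sing \<kappa>_def using False
    by (simp only: nonzero_mult_div_cancel_right) simp
qed

lemma exists_\<eta>: "\<exists>\<eta>>0. lip_sing \<eta> / (\<beta> * (\<beta> - 1)) \<le> (1 + \<kappa>) / 2"
proof (cases "\<kappa> = 0")
  case True then show ?thesis using lip_sing_eq[of 1] by (intro exI[of _ 1]) auto
next
  case False
  then have \<kappa>_pos: "\<kappa> > 0" using \<kappa> by simp
  define \<eta> where "\<eta> = ln ((1 + \<kappa>) / (2 * \<kappa>)) / 2"
  have "\<eta> > 0" unfolding \<eta>_def using \<kappa> \<kappa>_pos by simp
  have "lip_sing \<eta> / (\<beta> * (\<beta> - 1)) = \<kappa> * exp ((2 - \<gamma>) * \<eta>)" by (rule lip_sing_eq)
  also have "\<dots> \<le> \<kappa> * exp (2 * \<eta>)" using \<open>\<eta> > 0\<close> \<gamma>0 \<kappa> by (intro mult_left_mono) auto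
  also have "exp (2 * \<eta>) = (1 + \<kappa>) / (2 * \<kappa>)" unfolding \<eta>_def using \<kappa> \<kappa>_pos by simp
  finally show ?thesis using \<open>\<eta> > 0\<close> \<kappa>_pos by auto
qed

lemma exists_\<delta>:
  assumes \<eta>: "\<eta> > 0"
  shows "\<exists>\<delta>>0. exp (- (1 - \<kappa>) * \<eta>) < \<rho> 0 / \<rho> \<delta> \<and> exp (\<kappa> * \<eta>) + \<beta> * exp \<eta> * \<delta>^2 / 4 < exp \<eta>"
proof -
  have "((\<lambda>d. \<rho> 0 / \<rho> d) \<longlongrightarrow> 1) (at_right 0)"
    using tendsto_divide[OF tendsto_const \<rho>_tendsto, of "\<rho> 0"] by simp
  moreover have "exp (- (1 - \<kappa>) * \<eta>) < 1" using \<kappa> \<eta> by (simp add: mult_neg_pos)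
  ultimately have "\<forall>\<^sub>F d in at_right 0. exp (- (1 - \<kappa>) * \<eta>) < \<rho> 0 / \<rho> d"
    by (rule order_tendstoD(1))
  moreover have "\<forall>\<^sub>F d in at_right 0. exp (\<kappa> * \<eta>) + \<beta> * exp \<eta> * d^2 / 4 < exp \<eta>"
  proof (rule order_tendstoD(2))
    show "((\<lambda>d. exp (\<kappa> * \<eta>) + \<beta> * exp \<eta> * d^2 / 4) \<longlongrightarrow> exp (\<kappa> * \<eta>)) (at_right 0)"
      by (auto intro!: tendsto_eq_intros)
    show "exp (\<kappa> * \<eta>) < exp \<eta>" using \<kappa> \<eta> by simp
  qed
  moreover have "\<forall>\<^sub>F d in at_right (0::real). 0 < d" by (rule eventually_at_right_less)
  ultimately have "\<forall>\<^sub>F d in at_right (0::real).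
      0 < d \<and> exp (- (1 - \<kappa>) * \<eta>) < \<rho> 0 / \<rho> d \<and> exp (\<kappa> * \<eta>) + \<beta> * exp \<eta> * d^2 / 4 < exp \<eta>"
    by eventually_elim auto
  then show ?thesis by (auto dest!: eventually_happens)
qed

lemma exists_truncated_problem: "\<exists>\<eta> \<delta> K. truncated_problem n \<gamma> \<beta> R \<eta> \<delta> K"
proof -
  obtain \<eta> where \<eta>: "\<eta> > 0" "lip_sing \<eta> / (\<beta> * (\<beta> - 1)) \<le> (1 + \<kappa>) / 2" using exists_\<eta> by blast
  obtain \<delta> where \<delta>: "\<delta> > 0" "exp (- (1 - \<kappa>) * \<eta>) < \<rho> 0 / \<rho> \<delta>"
    "exp (\<kappa> * \<eta>) + \<beta> * exp \<eta> * \<delta>^2 / 4 < exp \<eta>"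
    using exists_\<delta>[OF \<eta>(1)] by blast
  define B where "B = lip_reg \<eta> \<delta>"
  have "B \<ge> 0" unfolding B_def lip_reg_def using \<gamma>0 \<gamma>1 \<beta>_ge_1 by simp
  define K where "K = 1 + 4 * B / (1 - \<kappa>)"
  have K: "K \<ge> 1" unfolding K_def using \<open>B \<ge> 0\<close> \<kappa> by simp
  have "B / K^2 \<le> B / K" using K \<open>B \<ge> 0\<close> by (intro divide_left_mono) (auto simp: power2_eq_square)
  also have "B / K \<le> (1 - \<kappa>) / 4"
  proof -
    have "K * (1 - \<kappa>) = (1 - \<kappa>) + 4 * B" unfolding K_def using \<kappa> by (simp add: field_simps)
    then have "4 * B \<le> K * (1 - \<kappa>)" using \<kappa> by linarith
    then show ?thesis using K by (simp add: field_simps)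
  qed
  finally have "lip_reg \<eta> \<delta> / K^2 \<le> (1 - \<kappa>) / 4" unfolding B_def .
  moreover have "(1 + \<kappa>) / 2 + (1 - \<kappa>) / 4 < 1" using \<kappa>(2) by (simp add: field_simps)
  ultimately have "lip_sing \<eta> / (\<beta> * (\<beta> - 1)) + lip_reg \<eta> \<delta> / K^2 < 1"
    using \<eta>(2) by linarith
  then have "truncated_problem n \<gamma> \<beta> R \<eta> \<delta> K"
    using \<eta> \<delta> K by unfold_locales auto
  then show ?thesis by blast
qed

lemma exists_solution:
  "\<exists>U U' U'' :: real \<Rightarrow> real.
       continuous_on {R..} U \<and>
       (\<forall>r>R. (U has_real_derivative U' r) (at r) \<and> (U' has_real_derivative U'' r) (at r)) \<and>
       continuous_on {R<..} U'' \<and>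
       (\<forall>r>R. U r > 0) \<and> strict_mono_on {R<..} U \<and>
       (\<forall>r>R. U'' r + ((real n - 1) / r + r / 2) * U' r - \<beta> / 2 * U r
               = \<gamma> * U r powr (\<gamma> - 1)) \<and>
       U R = 0 \<and>
       ((\<lambda>r. U r powr (1 / \<beta>) / (r - R)) \<longlongrightarrow> sqrt 2 / \<beta>) (at_right R) \<and>
       (\<exists>c>0. ((\<lambda>r. U r / r powr \<beta>) \<longlongrightarrow> c) at_top)"
proof -
  obtain \<eta> \<delta> K where "truncated_problem n \<gamma> \<beta> R \<eta> \<delta> K" using exists_truncated_problem by blast
  then interpret truncated_problem n \<gamma> \<beta> R \<eta> \<delta> K .
  obtain H where "H \<in> Dom" "\<Phi> H = H" using fixpoint by blast
  then interpret fixed_point_solution n \<gamma> \<beta> R \<eta> \<delta> K H by unfold_locales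
  show ?thesis
    by (intro exI[of _ "\<lambda>r. V (r - R)"] exI[of _ "\<lambda>r. V' (r - R)"] exI[of _ "\<lambda>r. V'' (r - R)"])
       (rule shifted_solution)
qed

end

theorem theorem6p1:
  fixes n :: nat and \<gamma> \<beta> :: real
  assumes "n \<ge> 1" and "0 \<le> \<gamma>" and "\<gamma> \<le> 1" and "\<beta> = 2 / (2 - \<gamma>)"
  shows "\<forall>R::real. R > 0 \<longrightarrow>
    (\<exists>U U' U'' :: real \<Rightarrow> real.
       continuous_on {R..} U \<and>
       (\<forall>r>R. (U has_real_derivative U' r) (at r) \<and> (U' has_real_derivative U'' r) (at r)) \<and>
       continuous_on {R<..} U'' \<and>
       (\<forall>r>R. U r > 0) \<and> strict_mono_on {R<..} U \<and>
       (\<forall>r>R. U'' r + ((real n - 1) / r + r / 2) * U' r - \<beta> / 2 * U r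
               = \<gamma> * U r powr (\<gamma> - 1)) \<and>
       U R = 0 \<and>
       ((\<lambda>r. U r powr (1 / \<beta>) / (r - R)) \<longlongrightarrow> sqrt 2 / \<beta>) (at_right R) \<and>
       (\<exists>c>0. ((\<lambda>r. U r / r powr \<beta>) \<longlongrightarrow> c) at_top))"
proof (intro allI impI profile_ode.exists_solution)
  fix R :: real
  assume "R > 0"
  then show "profile_ode n \<gamma> \<beta> R" using assms by unfold_locales auto
qed

end
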